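(* Let $G=(V,E)$ be an $r$-regular graph on a finite vertex set $V$ with $|V|$ even. Then $G$ is B-factorizable if and only if, for every HAP table $d\mapsto\{H(d),A(d)\}$ ($d\in\{1,\dots,r\}$), the polytope $P(G,HA)$ contains an integral point whenever it is non-empty. In particular, the complete graph on $V$ is B-factorizable if and only if for every HAP table, $P(K_{|V|},HA)$ contains an integral point whenever it is non-empty.
   Context: Let $V$ be a finite set with $|V|$ even. $K=\binom{V}{2}$ is the set of 2-element subsets of $V$. An equal partition of $V$ is an unordered pair $\{H,A\}$ of disjoint subsets with $H\cup A=V$ and $|H|=|A|=|V|/2$; $C=C(V)$ is the set of equal partitions. For $c=\{H,A\}\in C$, $B_c$ is the complete bipartite graph with parts $H$ and $A$. Vectors live in $\mathbb N^{K\cup C}$ with $\mathbb N=\{0,1,2,\dots\}$; $v|_K$ denotes the restriction to coordinates in $K$. For $E\subseteq K$, $\chi_E\in\{0,1\}^K$ is its indicator vector. For $E\subseteq K$ and $c\in C$, $\chi_{E,c}\in\mathbb N^{K\cup C}$ has $K$-components $\chi_E$ and $C$-components equal to the indicator of $c$. $PM(V)=\{\chi_{q,c}: c\in C,\ q\text{ a perfect matching of }B_c\}$. For $\mathcal M\subseteq\mathbb N^{K\cup C}$, $\mathbf N(\mathcal M)$ is the set of finite nonnegative integer combinations of elements of $\mathcal M$, and $\overline{\mathbf N}(\mathcal M)=\{v\in\mathbb N^{K\cup C}: kv\in\mathbf N(\mathcal M)\text{ for some integer }k\ge1\}$. A regular graph $G=(V,E)$ is B-factorizable if every $v\in\overline{\mathbf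 N}(PM(V))$ with $v|_K=\chi_E$ belongs to $\mathbf N(PM(V))$. For an $r$-regular graph $G=(V,E)$, a HAP table is a map assigning to each $d\in\{1,\dots,r\}$ an equal partition $\{H(d),A(d)\}\in C$. $P(G,HA)$ is the set of real vectors $(x_{e,d})_{e\in K,\,d\in\{1,\dots,r\}}$ satisfying: (1) $\sum_{d=1}^r x_{e,d}=1$ for every $e\in E$, and $x_{e,d}=0$ for every $e\in K\setminus E$ and every $d$; (2) for every $d$ and every $a\in V$, $\sum_{b\in V\setminus\{a\}}x_{\{a,b\},d}=1$; (3) $0\le x_{e,d}\le1$ for all $e\in E$ and all $d$; (4) $x_{\{a,b\},d}=0$ whenever $\{a,b\}\in E$ and $a,b$ are both in $H(d)$ or both in $A(d)$. *)

theory Defs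
  imports Complex_Main
begin

definition Kset :: "'a set \<Rightarrow> 'a set set" where
  "Kset V = {e. \<exists>a b. a \<in> V \<and> b \<in> V \<and> a \<noteq> b \<and> e = {a, b}}"

definition Cset :: "'a set \<Rightarrow> 'a set set set" where
  "Cset V = {c. \<exists>H A. c = {H, A} \<and> H \<inter> A = {} \<and> H \<union> A = V \<and> card H = card A}"

text \<open>Vectors in N^(K \<union> C): functions on the disjoint sum, zero outside K \<union> C.\<close>
type_synonym 'a vec = "'a set + 'a set set \<Rightarrow> nat"

definition idx :: "'a set \<Rightarrow> ('a set + 'a set set) set" where
  "idx V = Inl ` Kset V \<union> Inr ` Cset V"

definition chi_EC :: "'a set \<Rightarrow> 'a set set \<Rightarrow> 'a set set \<Rightarrow> 'a vec" where
  "chi_EC V E c = (\<lambda>i. case i of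
       Inl e \<Rightarrow> (if e \<in> Kset V \<and> e \<in> E then 1 else 0)
     | Inr c' \<Rightarrow> (if c' \<in> Cset V \<and> c' = c then 1 else 0))"

definition Bedges :: "'a set set \<Rightarrow> 'a set set" where
  "Bedges c = {e. \<exists>H A h a. c = {H, A} \<and> h \<in> H \<and> a \<in> A \<and> e = {h, a}}"

definition perfect_matching_B :: "'a set \<Rightarrow> 'a set set \<Rightarrow> 'a set set \<Rightarrow> bool" where
  "perfect_matching_B V c q \<longleftrightarrow> q \<subseteq> Bedges c \<and> (\<forall>v\<in>V. \<exists>!e. e \<in> q \<and> v \<in> e)"

definition PM :: "'a set \<Rightarrow> 'a vec set" where
  "PM V = {chi_EC V q c | q c. c \<in> Cset V \<and> perfect_matching_B V c q}"

definition Ncomb :: "'a vec set \<Rightarrow> 'a vec set" where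
  "Ncomb M = {v. \<exists>S coef. finite S \<and> S \<subseteq> M \<and>
                   v = (\<lambda>i. \<Sum>m\<in>S. coef m * m i)}"

definition Nbar :: "'a set \<Rightarrow> 'a vec set \<Rightarrow> 'a vec set" where
  "Nbar V M = {v. (\<forall>i. i \<notin> idx V \<longrightarrow> v i = 0) \<and>
                  (\<exists>k::nat. k \<ge> 1 \<and> (\<lambda>i. k * v i) \<in> Ncomb M)}"

definition regular_graph :: "'a set \<Rightarrow> 'a set set \<Rightarrow> nat \<Rightarrow> bool" where
  "regular_graph V E r \<longleftrightarrow> E \<subseteq> Kset V \<and> (\<forall>a\<in>V. card {e \<in> E. a \<in> e} = r)"

definition B_factorizable :: "'a set \<Rightarrow> 'a set set \<Rightarrow> bool" where
  "B_factorizable V E \<longleftrightarrow>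
     (\<forall>v \<in> Nbar V (PM V).
        (\<forall>e \<in> Kset V. v (Inl e) = (if e \<in> E then 1 else 0)) \<longrightarrow> v \<in> Ncomb (PM V))"

definition HAP_table :: "'a set \<Rightarrow> nat \<Rightarrow> (nat \<Rightarrow> 'a set set) \<Rightarrow> bool" where
  "HAP_table V r HA \<longleftrightarrow> (\<forall>d \<in> {1..r}. HA d \<in> Cset V)"

definition PGHA :: "'a set \<Rightarrow> 'a set set \<Rightarrow> nat \<Rightarrow> (nat \<Rightarrow> 'a set set)
                     \<Rightarrow> ('a set \<Rightarrow> nat \<Rightarrow> real) set" where
  "PGHA V E r HA = {x.
     (\<forall>e d. \<not> (e \<in> Kset V \<and> d \<in> {1..r}) \<longrightarrow> x e d = 0) \<and>
     (\<forall>e \<in> E. (\<Sum>d = 1..r. x e d) = 1) \<and>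
     (\<forall>e \<in> Kset V - E. \<forall>d \<in> {1..r}. x e d = 0) \<and>
     (\<forall>d \<in> {1..r}. \<forall>a \<in> V. (\<Sum>b \<in> V - {a}. x {a, b} d) = 1) \<and>
     (\<forall>e \<in> E. \<forall>d \<in> {1..r}. 0 \<le> x e d \<and> x e d \<le> 1) \<and>
     (\<forall>a b d. {a, b} \<in> E \<and> d \<in> {1..r} \<and> (\<exists>S \<in> HA d. a \<in> S \<and> b \<in> S) \<longrightarrow> x {a, b} d = 0)}"

definition integral_point :: "('a set \<Rightarrow> nat \<Rightarrow> real) \<Rightarrow> bool" where
  "integral_point x \<longleftrightarrow> (\<forall>e d. x e d \<in> \<int>)"

end

theory Submission
  imports Defs "HOL-Library.Multiset"
begin

(* Theorem 4: an r-regular graph G = (V, E) is B-factorizable iff for every HAP table HA the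
   polytope P(G,HA), when nonempty, contains an integral point; the complete graph is the case
   E = K, r = |V| - 1.  Both sides are compared through the table vector of HA, i.e.
   (chi_E, number of entries of HA equal to c), and through HA-factorizations of E: families of
   perfect matchings q d of B_(HA d) partitioning E.  Integral points of P(G,HA) are exactly the
   indicator vectors of HA-factorizations, and these exist iff the table vector lies in N(PM).
   (=>) Fourier-Motzkin gives a rational point of P(G,HA); scaled by a common denominator N,
   each colour class is an N-regular multigraph on B_(HA d), hence (Hall, Koenig) a sum of N
   perfect matchings, so the table vector lies in the saturation of N(PM).
   (<=) A vector v of the saturation with K-part chi_E has C-part of total weight r; listing each
   class c exactly v(c) times gives a table with table vector v, and averaging a representation
   k v = sum of generators over the entries of each class gives a point of P(G,HA). *)

(* A linear inequality over a finite index set I is a pair (a, b), read as lin I a x \<le> b. *)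
definition lin :: "'v set \<Rightarrow> ('v \<Rightarrow> real) \<Rightarrow> ('v \<Rightarrow> real) \<Rightarrow> real" where
  "lin I a x = (\<Sum>i\<in>I. a i * x i)"

(* The Fourier-Motzkin combination of p and q that cancels the coefficient of variable j
   (a positive combination when p has positive and q negative coefficient at j). *)
definition eliminate :: "'v \<Rightarrow> ('v \<Rightarrow> real) \<times> real \<Rightarrow> ('v \<Rightarrow> real) \<times> real \<Rightarrow> ('v \<Rightarrow> real) \<times> real" where
  "eliminate j p q = ((\<lambda>i. (- fst q j) * fst p i + fst p j * fst q i), (- fst q j) * snd p + fst p j * snd q)"

lemma lin_eliminate:
  "lin I (fst (eliminate j p q)) x = (- fst q j) * lin I (fst p) x + fst p j * lin I (fst q) x"
proof -
  have "lin I (fst (eliminate j p q)) x = (\<Sum>i\<in>I. (- fst q j) * (fst p i * x i) + fst p j * (fst q i * x i))"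
    unfolding lin_def eliminate_def by (rule sum.cong) (auto simp: algebra_simps)
  then show ?thesis by (simp only: lin_def sum.distrib sum_distrib_left)
qed

lemma lin_insert: "finite I \<Longrightarrow> j \<notin> I \<Longrightarrow> lin (insert j I) a x = a j * x j + lin I a x"
  by (simp add: lin_def)

lemma lin_upd: "j \<notin> I \<Longrightarrow> lin I a (x(j := t)) = lin I a x"
  unfolding lin_def by (rule sum.cong) auto

lemma lin_rat: "\<forall>i\<in>I. a i \<in> \<rat> \<Longrightarrow> \<forall>i. x i \<in> \<rat> \<Longrightarrow> lin I a x \<in> \<rat>"
  unfolding lin_def by (intro Rats_sum Rats_mult) auto

lemma eliminate_sound:
  assumes "finite I" "j \<notin> I" "fst p j > 0" "fst q j < 0"
    and "lin (insert j I) (fst p) x \<le> snd p" "lin (insert j I) (fst q) x \<le> snd q"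
  shows "lin I (fst (eliminate j p q)) x \<le> snd (eliminate j p q)"
proof -
  have "(- fst q j) * (fst p j * x j + lin I (fst p) x) \<le> (- fst q j) * snd p"
    using assms by (intro mult_left_mono) (auto simp: lin_insert)
  moreover have "fst p j * (fst q j * x j + lin I (fst q) x) \<le> fst p j * snd q"
    using assms by (intro mult_left_mono) (auto simp: lin_insert)
  ultimately show ?thesis
    unfolding lin_eliminate by (simp add: eliminate_def algebra_simps)
qed

lemma rational_between:
  fixes L U :: "real set"
  assumes "finite L" "finite U" "L \<subseteq> \<rat>" "U \<subseteq> \<rat>" "\<forall>l\<in>L. \<forall>u\<in>U. l \<le> u"
  shows "\<exists>t\<in>\<rat>. (\<forall>l\<in>L. l \<le> t) \<and> (\<forall>u\<in>U. t \<le> u)"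
proof (cases "L = {}")
  case True
  show ?thesis
  proof (cases "U = {}")
    case False
    then have "Min U \<in> U" using assms(2) by simp
    then have "Min U \<in> \<rat>" using assms(4) by blast
    then show ?thesis using True assms(2) by (intro bexI[of _ "Min U"]) auto
  qed (use True in auto)
next
  case False
  then have "Max L \<in> L" using assms(1) by simp
  then have "Max L \<in> \<rat>" using assms(3) by blast
  then show ?thesis using False assms(1,5) by (intro bexI[of _ "Max L"]) auto
qed

definition eliminated_system ::
    "'v \<Rightarrow> (('v \<Rightarrow> real) \<times> real) set \<Rightarrow> (('v \<Rightarrow> real) \<times> real) set" where
  "eliminated_system j CS = {c\<in>CS. fst c j = 0} \<union>
     (\<lambda>(p, q). eliminate j p q) ` ({p\<in>CS. fst p j > 0} \<times> {q\<in>CS. fst q j < 0})"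

lemma eliminated_system_rational:
  assumes "finite CS" "\<forall>c\<in>CS. (\<forall>i\<in>insert j I. fst c i \<in> \<rat>) \<and> snd c \<in> \<rat>"
  shows "finite (eliminated_system j CS)"
    and "\<forall>c\<in>eliminated_system j CS. (\<forall>i\<in>I. fst c i \<in> \<rat>) \<and> snd c \<in> \<rat>"
proof -
  show "finite (eliminated_system j CS)" using assms(1) by (simp add: eliminated_system_def)
  show "\<forall>c\<in>eliminated_system j CS. (\<forall>i\<in>I. fst c i \<in> \<rat>) \<and> snd c \<in> \<rat>"
  proof
    fix c assume "c \<in> eliminated_system j CS"
    then consider "c \<in> CS" | p q where "p \<in> CS" "q \<in> CS" "c = eliminate j p q"
      unfolding eliminated_system_def by auto
    then show "(\<forall>i\<in>I. fst c i \<in> \<rat>) \<and> snd c \<in> \<rat>"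
    proof cases
      case 2
      then show ?thesis using assms(2) unfolding eliminate_def
        by (simp add: Rats_add Rats_mult Rats_minus_iff)
    qed (use assms(2) in auto)
  qed
qed

lemma eliminated_system_sound:
  assumes "finite I" "j \<notin> I" "\<forall>c\<in>CS. lin (insert j I) (fst c) x \<le> snd c"
  shows "\<forall>c\<in>eliminated_system j CS. lin I (fst c) x \<le> snd c"
proof
  fix c assume "c \<in> eliminated_system j CS"
  then consider "c \<in> CS" "fst c j = 0"
    | p q where "p \<in> CS" "q \<in> CS" "fst p j > 0" "fst q j < 0" "c = eliminate j p q"
    unfolding eliminated_system_def by auto
  then show "lin I (fst c) x \<le> snd c"
  proof cases
    case 1 then show ?thesis using assms by (auto simp: lin_insert)
  next
    case 2 then show ?thesis using assms(3) eliminate_sound[OF assms(1,2)] by blast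
  qed
qed

lemma eliminate_bounds:
  assumes "fst p j > 0" "fst q j < 0" "lin I (fst (eliminate j p q)) y \<le> snd (eliminate j p q)"
  shows "(snd q - lin I (fst q) y) / fst q j \<le> (snd p - lin I (fst p) y) / fst p j"
proof -
  have "(- fst q j) * lin I (fst p) y + fst p j * lin I (fst q) y \<le> (- fst q j) * snd p + fst p j * snd q"
    using assms(3) unfolding lin_eliminate by (simp add: eliminate_def)
  then have "(snd p - lin I (fst p) y) * fst q j \<le> (snd q - lin I (fst q) y) * fst p j"
    by (simp add: algebra_simps)
  then show ?thesis using assms(1,2) by (simp add: divide_simps)
qed

lemma eliminate_lift:
  assumes fin: "finite I" "finite CS" and j: "j \<notin> I"
    and rat: "\<forall>c\<in>CS. (\<forall>i\<in>insert j I. fst c i \<in> \<rat>) \<and> snd c \<in> \<rat>" "\<forall>i. y i \<in> \<rat>"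
    and sat: "\<forall>c\<in>eliminated_system j CS. lin I (fst c) y \<le> snd c"
  shows "\<exists>y'. (\<forall>i. y' i \<in> \<rat>) \<and> (\<forall>c\<in>CS. lin (insert j I) (fst c) y' \<le> snd c)"
proof -
  (* With y fixed elsewhere, an inequality c with fst c j > 0 (resp. < 0) is an upper
     (resp. lower) bound bnd c for the value of variable j. *)
  define bnd where "bnd c = (snd c - lin I (fst c) y) / fst c j" for c
  define P where "P = {c\<in>CS. fst c j > 0}"
  define N where "N = {c\<in>CS. fst c j < 0}"
  have "bnd q \<le> bnd p" if "p \<in> P" "q \<in> N" for p q
  proof -
    have "eliminate j p q \<in> eliminated_system j CS"
      using that unfolding P_def N_def eliminated_system_def by (auto intro!: image_eqI[of _ _ "(p, q)"])
    then have sat_pq: "lin I (fst (eliminate j p q)) y \<le> snd (eliminate j p q)" using sat by blast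
    have pq: "fst p j > 0" "fst q j < 0" using that by (auto simp: P_def N_def)
    show ?thesis unfolding bnd_def by (rule eliminate_bounds[OF pq sat_pq])
  qed
  moreover have "bnd c \<in> \<rat>" if "c \<in> CS" for c
    using rat that unfolding bnd_def by (intro Rats_divide Rats_diff lin_rat) auto
  ultimately have "\<exists>t\<in>\<rat>. (\<forall>l\<in>bnd ` N. l \<le> t) \<and> (\<forall>u\<in>bnd ` P. t \<le> u)"
    using fin by (intro rational_between) (auto simp: P_def N_def)
  then obtain t where "t \<in> \<rat>" "\<forall>l\<in>bnd ` N. l \<le> t" "\<forall>u\<in>bnd ` P. t \<le> u" by blast
  then have t: "t \<in> \<rat>" "\<forall>q\<in>N. bnd q \<le> t" "\<forall>p\<in>P. t \<le> bnd p" by simp_all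
  have "lin (insert j I) (fst c) (y(j := t)) \<le> snd c" if c: "c \<in> CS" for c
  proof -
    have e: "lin (insert j I) (fst c) (y(j := t)) = fst c j * t + lin I (fst c) y"
      using fin j by (simp add: lin_insert lin_upd)
    consider "fst c j = 0" | "fst c j > 0" | "fst c j < 0" by linarith
    then show ?thesis
    proof cases
      case 1
      then have "c \<in> eliminated_system j CS" using c unfolding eliminated_system_def by blast
      then show ?thesis using e sat 1 by simp
    next
      case 2 then have "t \<le> bnd c" using t(3) c unfolding P_def by blast
      then show ?thesis using e 2 by (simp add: bnd_def pos_le_divide_eq algebra_simps)
    next
      case 3 then have "bnd c \<le> t" using t(2) c unfolding N_def by blast
      then show ?thesis using e 3 by (simp add: bnd_def neg_divide_le_eq algebra_simps)
    qed
  qed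
  then show ?thesis using t(1) rat(2) by (intro exI[of _ "y(j := t)"]) auto
qed

lemma rational_solution:
  assumes "finite I" "finite CS" "\<forall>c\<in>CS. (\<forall>i\<in>I. fst c i \<in> \<rat>) \<and> snd c \<in> \<rat>"
    and "\<forall>c\<in>CS. lin I (fst c) x \<le> snd c"
  shows "\<exists>y. (\<forall>i. y i \<in> \<rat>) \<and> (\<forall>c\<in>CS. lin I (fst c) y \<le> snd c)"
  using assms
proof (induction I arbitrary: CS rule: finite_induct)
  case empty
  then show ?case by (intro exI[of _ "\<lambda>_. 0"]) (auto simp: lin_def)
next
  case (insert j I)
  note elim = eliminated_system_rational[OF insert.prems(1,2)]
  obtain y where "\<forall>i. y i \<in> \<rat>" "\<forall>c\<in>eliminated_system j CS. lin I (fst c) y \<le> snd c"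
    using insert.IH[OF elim eliminated_system_sound[OF insert.hyps(1,2) insert.prems(3)]] by blast
  then show ?case using eliminate_lift[OF insert.hyps(1) insert.prems(1) insert.hyps(2) insert.prems(2)] by blast
qed

definition hall_condition :: "'i set \<Rightarrow> ('i \<Rightarrow> 'b set) \<Rightarrow> bool" where
  "hall_condition I S \<longleftrightarrow> (\<forall>J\<subseteq>I. card J \<le> card (\<Union>(S ` J)))"

lemma hall_condition_remove_tight:
  assumes fin: "finite I" "\<forall>i\<in>I. finite (S i)" and hall: "hall_condition I S"
    and J: "J \<subseteq> I" "card (\<Union>(S ` J)) \<le> card J"
  shows "hall_condition (I - J) (\<lambda>i. S i - \<Union>(S ` J))"
  unfolding hall_condition_def
proof (intro allI impI)
  fix K assume K: "K \<subseteq> I - J"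
  define U where "U = \<Union>(S ` J)"
  define X where "X = \<Union>((\<lambda>i. S i - U) ` K)"
  have finK: "finite K" and finJ: "finite J" using K J(1) fin(1) finite_subset by blast+
  have finU: "finite U" using J(1) fin(2) finJ unfolding U_def by auto
  have "finite (\<Union>(S ` K))" using K fin(2) finK by auto
  then have finX: "finite X" by (rule finite_subset[rotated]) (auto simp: X_def)
  have "card J \<le> card U" using hall J(1) unfolding hall_condition_def U_def by blast
  then have cU: "card U = card J" using J(2) unfolding U_def by linarith
  have "K \<inter> J = {}" using K by blast
  then have "card K + card J = card (K \<union> J)" by (simp add: card_Un_disjoint[OF finK finJ])
  also have "\<dots> \<le> card (\<Union>(S ` (K \<union> J)))"
  proof -
    have "K \<union> J \<subseteq> I" using K J(1) by blast
    then show ?thesis using hall unfolding hall_condition_def by blast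
  qed
  also have "\<Union>(S ` (K \<union> J)) = X \<union> U" unfolding U_def X_def by blast
  also have "card (X \<union> U) = card X + card U"
    by (rule card_Un_disjoint[OF finX finU]) (auto simp: X_def)
  finally show "card K \<le> card (\<Union>((\<lambda>i. S i - \<Union>(S ` J)) ` K))"
    using cU unfolding X_def U_def by linarith
qed

lemma hall_condition_remove_point:
  assumes fin: "finite I" "\<forall>i\<in>I. finite (S i)"
    and slack: "\<forall>J. J \<subseteq> I \<and> J \<noteq> {} \<and> J \<noteq> I \<longrightarrow> card J < card (\<Union>(S ` J))"
    and i0: "i0 \<in> I"
  shows "hall_condition (I - {i0}) (\<lambda>i. S i - {x})"
  unfolding hall_condition_def
proof (intro allI impI)
  fix K assume K: "K \<subseteq> I - {i0}"
  show "card K \<le> card (\<Union>((\<lambda>i. S i - {x}) ` K))"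
  proof (cases "K = {}")
    case False
    have "card K < card (\<Union>(S ` K))" using slack K i0 False by blast
    moreover have "card (\<Union>(S ` K)) - card {x} \<le> card (\<Union>(S ` K) - {x})"
      by (rule diff_card_le_card_Diff) simp
    moreover have "\<Union>((\<lambda>i. S i - {x}) ` K) = \<Union>(S ` K) - {x}" by auto
    ultimately show ?thesis by simp
  qed simp
qed

lemma sdr_glue:
  assumes f1: "\<forall>i\<in>J. f1 i \<in> S i" "inj_on f1 J"
    and f2: "\<forall>i\<in>I - J. f2 i \<in> S i - \<Union>(S ` J)" "inj_on f2 (I - J)"
  shows "\<forall>i\<in>I. (if i \<in> J then f1 i else f2 i) \<in> S i"
    and "inj_on (\<lambda>i. if i \<in> J then f1 i else f2 i) I"
proof -
  show "\<forall>i\<in>I. (if i \<in> J then f1 i else f2 i) \<in> S i"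
  proof
    fix i assume "i \<in> I"
    then show "(if i \<in> J then f1 i else f2 i) \<in> S i" using f1(1) f2(1) by (cases "i \<in> J") auto
  qed
  have disj: "f1 i \<noteq> f2 i'" if "i \<in> J" "i' \<in> I - J" for i i'
  proof -
    have "f1 i \<in> \<Union>(S ` J)" using f1(1) that(1) by blast
    moreover have "f2 i' \<notin> \<Union>(S ` J)" using f2(1) that(2) by blast
    ultimately show ?thesis by metis
  qed
  show "inj_on (\<lambda>i. if i \<in> J then f1 i else f2 i) I"
  proof (rule inj_onI)
    fix i i' assume i: "i \<in> I" "i' \<in> I"
      and eq: "(if i \<in> J then f1 i else f2 i) = (if i' \<in> J then f1 i' else f2 i')"
    consider "i \<in> J" "i' \<in> J" | "i \<in> J" "i' \<notin> J" | "i \<notin> J" "i' \<in> J" | "i \<notin> J" "i' \<notin> J"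
      by blast
    then show "i = i'"
    proof cases
      case 1 then show ?thesis using eq f1(2) by (simp add: inj_on_eq_iff)
    next
      case 2 then show ?thesis using eq disj i by simp
    next
      case 3 then show ?thesis using eq disj[of i' i] i by simp
    next
      case 4 then show ?thesis using eq f2(2) i by (simp add: inj_on_eq_iff)
    qed
  qed
qed

lemma sdr_extend:
  assumes f: "\<forall>i\<in>I - {i0}. f i \<in> S i - {x}" "inj_on f (I - {i0})" and x: "x \<in> S i0" and i0: "i0 \<in> I"
  shows "(\<forall>i\<in>I. (f(i0 := x)) i \<in> S i) \<and> inj_on (f(i0 := x)) I"
proof
  show "\<forall>i\<in>I. (f(i0 := x)) i \<in> S i" using f(1) x by auto
  have fx: "f i \<noteq> x" if "i \<in> I - {i0}" for i using f(1) that by blast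
  show "inj_on (f(i0 := x)) I"
  proof (rule inj_onI)
    fix i i' assume "i \<in> I" "i' \<in> I" "(f(i0 := x)) i = (f(i0 := x)) i'"
    then show "i = i'" using fx f(2) by (cases "i = i0"; cases "i' = i0") (auto simp: inj_on_def)
  qed
qed

theorem hall:
  fixes S :: "'i \<Rightarrow> 'b set"
  assumes "finite I" "\<forall>i\<in>I. finite (S i)" "hall_condition I S"
  shows "\<exists>f. (\<forall>i\<in>I. f i \<in> S i) \<and> inj_on f I"
  using assms
proof (induction "card I" arbitrary: I S rule: less_induct)
  case less
  show ?case
  proof (cases "\<exists>J. J \<subseteq> I \<and> J \<noteq> {} \<and> J \<noteq> I \<and> card (\<Union>(S ` J)) \<le> card J")
    case True
    then obtain J where J: "J \<subseteq> I" "J \<noteq> {}" "J \<noteq> I" "card (\<Union>(S ` J)) \<le> card J" by blast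
    have finJ: "finite J" using J(1) less.prems(1) finite_subset by blast
    have "card J < card I" using J(1,3) less.prems(1) by (meson psubsetI psubset_card_mono)
    moreover have "hall_condition J S" using less.prems(3) J(1) by (auto simp: hall_condition_def)
    ultimately obtain f1 where f1: "\<forall>i\<in>J. f1 i \<in> S i" "inj_on f1 J"
      using less.hyps finJ less.prems(2) J(1) by blast
    have "0 < card J" using J(2) finJ by (simp add: card_gt_0_iff)
    then have "card (I - J) < card I" using card_Diff_subset[OF finJ J(1)] \<open>card J < card I\<close> by linarith
    moreover have "hall_condition (I - J) (\<lambda>i. S i - \<Union>(S ` J))"
      by (rule hall_condition_remove_tight[OF less.prems J(1,4)])
    ultimately obtain f2 where f2: "\<forall>i\<in>I - J. f2 i \<in> S i - \<Union>(S ` J)" "inj_on f2 (I - J)"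
      using less.hyps[of "I - J" "\<lambda>i. S i - \<Union>(S ` J)"] less.prems(1,2) by blast
    show ?thesis
      by (rule exI[of _ "\<lambda>i. if i \<in> J then f1 i else f2 i"]) (use sdr_glue[OF f1 f2] in blast)
  next
    case no_tight: False
    have slack: "\<forall>J. J \<subseteq> I \<and> J \<noteq> {} \<and> J \<noteq> I \<longrightarrow> card J < card (\<Union>(S ` J))"
      using no_tight by (auto simp: not_le)
    show ?thesis
    proof (cases "I = {}")
      case False
      then obtain i0 where i0: "i0 \<in> I" by blast
      have "card {i0} \<le> card (\<Union>(S ` {i0}))"
        using less.prems(3) i0 unfolding hall_condition_def by blast
      then have "S i0 \<noteq> {}" by auto
      then obtain x where x: "x \<in> S i0" by blast
      have "card (I - {i0}) < card I" using i0 less.prems(1) by (meson card_Diff1_less)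
      moreover have "hall_condition (I - {i0}) (\<lambda>i. S i - {x})"
        by (rule hall_condition_remove_point[OF less.prems(1,2) slack i0])
      ultimately obtain f where f: "\<forall>i\<in>I - {i0}. f i \<in> S i - {x}" "inj_on f (I - {i0})"
        using less.hyps[of "I - {i0}" "\<lambda>i. S i - {x}"] less.prems(1,2) by blast
      then show ?thesis using sdr_extend[OF f x i0] by blast
    qed simp
  qed
qed

lemma sum_indicator:
  "finite D \<Longrightarrow> (\<Sum>d\<in>D. if P d then 1 else 0) = (of_nat (card {d\<in>D. P d}) :: 'n::semiring_1)"
  by (simp add: sum.If_cases Int_def)

lemma card_atLeastAtMost_Suc:
  "card {d\<in>{1..Suc r}. P d} = card {d\<in>{1..r}. P d} + (if P (Suc r) then 1 else 0)"
proof -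
  have "{d\<in>{1..Suc r}. P d} = {d\<in>{1..r}. P d} \<union> (if P (Suc r) then {Suc r} else {})"
    by (auto simp: le_Suc_eq)
  then show ?thesis by (simp add: card_Un_disjoint)
qed

lemma Kset_pair: "a \<in> V \<Longrightarrow> b \<in> V \<Longrightarrow> a \<noteq> b \<Longrightarrow> {a, b} \<in> Kset V"
  by (auto simp: Kset_def)

lemma Kset_edge_at:
  assumes "e \<in> Kset V" "v \<in> e"
  obtains b where "e = {v, b}" "b \<in> V" "b \<noteq> v"
  using assms by (auto simp: Kset_def insert_commute)

lemma finite_Kset: "finite V \<Longrightarrow> finite (Kset V)"
  by (rule finite_subset[of _ "Pow V"]) (auto simp: Kset_def)

lemma finite_Cset: "finite V \<Longrightarrow> finite (Cset V)"
  by (rule finite_subset[of _ "Pow (Pow V)"]) (auto simp: Cset_def)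

lemma CsetE:
  assumes "c \<in> Cset V"
  obtains H A where "c = {H, A}" "H \<inter> A = {}" "H \<union> A = V" "card H = card A"
  using assms by (auto simp: Cset_def)

lemma card_1_ex1: "card {x. P x} = 1 \<longleftrightarrow> (\<exists>!x. P x)"
proof
  assume "card {x. P x} = 1"
  then obtain x where x: "{x. P x} = {x}" by (auto simp: card_1_singleton_iff)
  then have "P x" "\<And>y. P y \<Longrightarrow> y = x" by (metis mem_Collect_eq singletonI, metis mem_Collect_eq singletonD)
  then show "\<exists>!x. P x" by blast
next
  assume "\<exists>!x. P x"
  then obtain x where "P x" "\<And>y. P y \<Longrightarrow> y = x" by blast
  then have "{x. P x} = {x}" by blast
  then show "card {x. P x} = 1" by simp
qed

lemma degree_as_neighbours:
  assumes "E \<subseteq> Kset V" "a \<in> V"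
  shows "card {e\<in>E. a \<in> e} = card {b\<in>V - {a}. {a, b} \<in> E}"
proof -
  have "bij_betw (\<lambda>b. {a, b}) {b\<in>V - {a}. {a, b} \<in> E} {e\<in>E. a \<in> e}"
    unfolding bij_betw_def
  proof
    show "inj_on (\<lambda>b. {a, b}) {b\<in>V - {a}. {a, b} \<in> E}" by (auto simp: inj_on_def doubleton_eq_iff)
    show "(\<lambda>b. {a, b}) ` {b\<in>V - {a}. {a, b} \<in> E} = {e\<in>E. a \<in> e}"
    proof
      show "{e\<in>E. a \<in> e} \<subseteq> (\<lambda>b. {a, b}) ` {b\<in>V - {a}. {a, b} \<in> E}"
      proof
        fix e assume e: "e \<in> {e\<in>E. a \<in> e}"
        then have "e \<in> Kset V" "a \<in> e" using assms(1) by auto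
        then obtain b where "e = {a, b}" "b \<in> V" "b \<noteq> a" by (rule Kset_edge_at)
        then show "e \<in> (\<lambda>b. {a, b}) ` {b\<in>V - {a}. {a, b} \<in> E}" using e by auto
      qed
    qed auto
  qed
  then show ?thesis by (simp add: bij_betw_same_card)
qed

lemma Bedges_iff:
  assumes "c \<in> Cset V"
  shows "{a, b} \<in> Bedges c \<longleftrightarrow> a \<in> V \<and> b \<in> V \<and> \<not> (\<exists>S\<in>c. a \<in> S \<and> b \<in> S)"
proof -
  obtain H A where HA: "c = {H, A}" "H \<inter> A = {}" "H \<union> A = V" using CsetE[OF assms] by metis
  have "{a, b} \<in> Bedges c \<longleftrightarrow> (a \<in> H \<and> b \<in> A) \<or> (a \<in> A \<and> b \<in> H)"
    unfolding Bedges_def HA(1) by (auto simp: doubleton_eq_iff)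
  also have "\<dots> \<longleftrightarrow> a \<in> V \<and> b \<in> V \<and> \<not> (\<exists>S\<in>c. a \<in> S \<and> b \<in> S)" using HA by auto
  finally show ?thesis .
qed

lemma Bedges_Kset:
  assumes "c \<in> Cset V" "e \<in> Bedges c"
  shows "e \<in> Kset V"
proof -
  obtain a b where e: "e = {a, b}" using assms(2) unfolding Bedges_def by blast
  then have ab: "a \<in> V" "b \<in> V" "\<not> (\<exists>S\<in>c. a \<in> S \<and> b \<in> S)"
    using assms Bedges_iff[OF assms(1)] by simp_all
  moreover have "a \<noteq> b"
  proof
    assume "a = b"
    obtain H A where "c = {H, A}" "H \<union> A = V" using CsetE[OF assms(1)] by metis
    then show False using ab \<open>a = b\<close> by auto
  qed
  ultimately show ?thesis using e by (simp add: Kset_pair)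
qed

lemma perfect_matching_iff_degree_one:
  assumes "c \<in> Cset V" "q \<subseteq> Bedges c"
  shows "perfect_matching_B V c q \<longleftrightarrow> (\<forall>a\<in>V. card {b\<in>V - {a}. {a, b} \<in> q} = 1)"
proof -
  have qK: "q \<subseteq> Kset V" using assms Bedges_Kset by blast
  have deg: "(\<exists>!e. e \<in> q \<and> a \<in> e) \<longleftrightarrow> card {b\<in>V - {a}. {a, b} \<in> q} = 1" if a: "a \<in> V" for a
    using degree_as_neighbours[OF qK a] card_1_ex1[of "\<lambda>e. e \<in> q \<and> a \<in> e"] by simp
  show ?thesis using assms(2) unfolding perfect_matching_B_def by (simp add: deg)
qed

lemma perfect_matching_degree:
  assumes "c \<in> Cset V" "perfect_matching_B V c q" "a \<in> V"
  shows "card {b\<in>V - {a}. {a, b} \<in> q} = 1"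
proof -
  have "q \<subseteq> Bedges c" using assms(2) by (simp add: perfect_matching_B_def)
  then show ?thesis using perfect_matching_iff_degree_one[OF assms(1)] assms(2,3) by simp
qed

lemma perfect_matching_row_sum:
  assumes "finite V" "c \<in> Cset V" "perfect_matching_B V c q" "a \<in> V"
  shows "(\<Sum>b\<in>V - {a}. if {a, b} \<in> q then 1 else 0) = (1 :: 'n::semiring_1)"
  using perfect_matching_degree[OF assms(2-4)] assms(1) by (simp add: sum_indicator)

lemma bipartite_row_sum:
  fixes w :: "'a set \<Rightarrow> nat"
  assumes fin: "finite V" and c: "c \<in> Cset V" "c = {X, Y}" "X \<inter> Y = {}" "X \<union> Y = V"
    and supp: "\<forall>e. 0 < w e \<longrightarrow> e \<in> Bedges c" and a: "a \<in> X"
  shows "(\<Sum>b\<in>V - {a}. w {a, b}) = (\<Sum>b\<in>Y. w {a, b})"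
proof -
  have "w {a, b} = 0" if "b \<in> X - {a}" for b
    using supp Bedges_iff[OF c(1), of a b] a that c(2) by blast
  then have zero: "(\<Sum>b\<in>X - {a}. w {a, b}) = 0" by simp
  have "finite X" "finite Y" using c(4) fin by (auto intro: finite_subset)
  moreover have "V - {a} = (X - {a}) \<union> Y" "(X - {a}) \<inter> Y = {}" using c(3,4) a by blast+
  ultimately show ?thesis using zero by (simp add: sum.union_disjoint)
qed

lemma regular_hall_condition:
  fixes w :: "'a set \<Rightarrow> nat"
  assumes fin: "finite H" "finite A" and k: "0 < k"
    and sH: "\<forall>h\<in>H. (\<Sum>a\<in>A. w {h, a}) = k" and sA: "\<forall>a\<in>A. (\<Sum>h\<in>H. w {a, h}) = k"
  shows "hall_condition H (\<lambda>h. {a\<in>A. 0 < w {h, a}})"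
  unfolding hall_condition_def
proof (intro allI impI)
  fix J assume J: "J \<subseteq> H"
  define N where "N = (\<Union>h\<in>J. {a\<in>A. 0 < w {h, a}})"
  have NA: "N \<subseteq> A" by (auto simp: N_def)
  have "k * card J = (\<Sum>h\<in>J. \<Sum>a\<in>A. w {h, a})" using sH J by (simp add: subset_eq)
  also have "\<dots> = (\<Sum>h\<in>J. \<Sum>a\<in>N. w {h, a})"
  proof (rule sum.cong[OF refl])
    fix h assume "h \<in> J"
    then have "\<forall>a\<in>A - N. w {h, a} = 0" by (auto simp: N_def)
    then show "(\<Sum>a\<in>A. w {h, a}) = (\<Sum>a\<in>N. w {h, a})" by (rule sum.mono_neutral_right[OF fin(2) NA])
  qed
  also have "\<dots> = (\<Sum>a\<in>N. \<Sum>h\<in>J. w {h, a})" by (rule sum.swap)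
  also have "\<dots> = (\<Sum>a\<in>N. \<Sum>h\<in>J. w {a, h})" by (simp only: insert_commute)
  also have "\<dots> \<le> (\<Sum>a\<in>N. \<Sum>h\<in>H. w {a, h})"
    by (rule sum_mono, rule sum_mono2[OF fin(1) J]) simp
  also have "\<dots> = k * card N" using sA NA by (simp add: subset_eq)
  finally show "card J \<le> card (\<Union>h\<in>J. {a\<in>A. 0 < w {h, a}})" using k by (simp add: N_def)
qed

lemma matching_of_bijection:
  assumes c: "c = {H, A}" "H \<inter> A = {}" "H \<union> A = V"
    and f: "inj_on f H" "f ` H = A"
  shows "perfect_matching_B V c ((\<lambda>h. {h, f h}) ` H)"
  unfolding perfect_matching_B_def
proof (intro conjI ballI)
  show "(\<lambda>h. {h, f h}) ` H \<subseteq> Bedges c" unfolding Bedges_def c(1) using f(2) by blast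
  fix v assume v: "v \<in> V"
  have fA: "f h \<in> A" if "h \<in> H" for h using f(2) that by blast
  show "\<exists>!e. e \<in> (\<lambda>h. {h, f h}) ` H \<and> v \<in> e"
  proof (cases "v \<in> H")
    case True
    show ?thesis
      by (rule ex1I[of _ "{v, f v}"]) (use True fA c(2) in auto)
  next
    case False
    then obtain h0 where h0: "h0 \<in> H" "v = f h0" using v c(3) f(2) by blast
    show ?thesis
    proof (rule ex1I[of _ "{h0, v}"])
      fix e assume "e \<in> (\<lambda>h. {h, f h}) ` H \<and> v \<in> e"
      then obtain h where "h \<in> H" "e = {h, f h}" "v = f h" using False by blast
      then show "e = {h0, v}" using f(1) h0 by (auto dest: inj_onD)
    qed (use h0 in auto)
  qed
qed

lemma regular_perfect_matching:
  fixes w :: "'a set \<Rightarrow> nat"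
  assumes fin: "finite V" and c: "c \<in> Cset V"
    and supp: "\<forall>e. 0 < w e \<longrightarrow> e \<in> Bedges c"
    and row: "\<forall>a\<in>V. (\<Sum>b\<in>V - {a}. w {a, b}) = k" and k: "0 < k"
  shows "\<exists>q. perfect_matching_B V c q \<and> (\<forall>e\<in>q. 0 < w e)"
proof -
  obtain H A where HA: "c = {H, A}" "H \<inter> A = {}" "H \<union> A = V" "card H = card A"
    using CsetE[OF c] by metis
  have finH: "finite H" and finA: "finite A" using HA(3) fin by (auto intro: finite_subset)
  have hall_H: "hall_condition H (\<lambda>h. {a\<in>A. 0 < w {h, a}})"
  proof (rule regular_hall_condition[OF finH finA k])
    show "\<forall>h\<in>H. (\<Sum>a\<in>A. w {h, a}) = k"
    proof
      fix h assume h: "h \<in> H"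
      have "h \<in> V" using h HA(3) by blast
      then show "(\<Sum>a\<in>A. w {h, a}) = k" using bipartite_row_sum[OF fin c HA(1-3) supp h] row by simp
    qed
    have swap: "c = {A, H}" "A \<inter> H = {}" "A \<union> H = V" using HA by auto
    show "\<forall>a\<in>A. (\<Sum>h\<in>H. w {a, h}) = k"
    proof
      fix a assume a: "a \<in> A"
      have "a \<in> V" using a HA(3) by blast
      then show "(\<Sum>h\<in>H. w {a, h}) = k" using bipartite_row_sum[OF fin c swap supp a] row by simp
    qed
  qed
  have "\<forall>h\<in>H. finite {a\<in>A. 0 < w {h, a}}" using finA by simp
  from hall[OF finH this hall_H]
  obtain f where f: "\<forall>h\<in>H. f h \<in> {a\<in>A. 0 < w {h, a}}" "inj_on f H" by (elim exE conjE)
  have "f ` H \<subseteq> A" using f(1) by auto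
  moreover have "card (f ` H) = card A" using card_image[OF f(2)] HA(4) by simp
  ultimately have "f ` H = A" by (rule card_subset_eq[OF finA])
  moreover have "\<forall>e\<in>(\<lambda>h. {h, f h}) ` H. 0 < w e" using f(1) by auto
  ultimately show ?thesis using matching_of_bijection[OF HA(1-3) f(2)] by blast
qed

lemma regular_decomposition:
  fixes w :: "'a set \<Rightarrow> nat"
  assumes fin: "finite V" and c: "c \<in> Cset V"
  shows "(\<forall>e. 0 < w e \<longrightarrow> e \<in> Bedges c) \<Longrightarrow> (\<forall>a\<in>V. (\<Sum>b\<in>V - {a}. w {a, b}) = k) \<Longrightarrow>
    \<exists>Qs. length Qs = k \<and> (\<forall>q\<in>set Qs. perfect_matching_B V c q) \<and>
      (\<forall>e. w e = (\<Sum>q\<leftarrow>Qs. if e \<in> q then 1 else 0))"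
proof (induction k arbitrary: w)
  case 0
  have "w e = 0" for e
  proof (rule ccontr)
    assume "w e \<noteq> 0"
    then have "e \<in> Kset V" using 0 Bedges_Kset[OF c] by blast
    then obtain a b where ab: "e = {a, b}" "a \<in> V" "b \<in> V - {a}" unfolding Kset_def by blast
    have "(\<Sum>b\<in>V - {a}. w {a, b}) = 0" using 0 ab(2) by simp
    then show False using fin ab \<open>w e \<noteq> 0\<close> by simp
  qed
  then show ?case by (intro exI[of _ "[]"]) auto
next
  case (Suc k)
  obtain q where q: "perfect_matching_B V c q" "\<forall>e\<in>q. 0 < w e"
    using regular_perfect_matching[OF fin c Suc.prems] by auto
  define w' where "w' e = w e - (if e \<in> q then 1 else 0)" for e
  have "\<forall>e. 0 < w' e \<longrightarrow> e \<in> Bedges c" using Suc.prems(1) by (auto simp: w'_def)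
  moreover have "\<forall>a\<in>V. (\<Sum>b\<in>V - {a}. w' {a, b}) = k"
  proof
    fix a assume a: "a \<in> V"
    have "(\<Sum>b\<in>V - {a}. w' {a, b}) = (\<Sum>b\<in>V - {a}. w {a, b}) - (\<Sum>b\<in>V - {a}. if {a, b} \<in> q then 1 else 0)"
      unfolding w'_def using q(2) by (intro sum_subtractf_nat) auto
    moreover have row: "(\<Sum>b\<in>V - {a}. if {a, b} \<in> q then 1 else 0) = (1::nat)"
      by (rule perfect_matching_row_sum[OF fin c q(1) a])
    ultimately show "(\<Sum>b\<in>V - {a}. w' {a, b}) = k" using Suc.prems(2) a unfolding row by simp
  qed
  ultimately obtain Qs where "length Qs = k" "\<forall>q\<in>set Qs. perfect_matching_B V c q"
    "\<forall>e. w' e = (\<Sum>q\<leftarrow>Qs. if e \<in> q then 1 else 0)"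
    using Suc.IH by blast
  moreover have "w e = (if e \<in> q then 1 else 0) + w' e" for e using q(2) by (simp add: w'_def)
  ultimately show ?case using q(1) by (intro exI[of _ "q # Qs"]) simp
qed

lemma chi_Inl: "e \<in> Kset V \<Longrightarrow> chi_EC V q c (Inl e) = (if e \<in> q then 1 else 0)"
  by (simp add: chi_EC_def)

lemma chi_Inr: "c' \<in> Cset V \<Longrightarrow> chi_EC V q c (Inr c') = (if c' = c then 1 else 0)"
  by (simp add: chi_EC_def)

lemma chi_le1: "chi_EC V q c i \<le> 1"
  by (simp add: chi_EC_def split: sum.splits)

lemma PM_E:
  assumes "m \<in> PM V"
  obtains q c where "m = chi_EC V q c" "c \<in> Cset V" "perfect_matching_B V c q"
  using assms by (auto simp: PM_def)

lemma PM_I: "c \<in> Cset V \<Longrightarrow> perfect_matching_B V c q \<Longrightarrow> chi_EC V q c \<in> PM V"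
  by (auto simp: PM_def)

lemma PM_class_edge:
  assumes "m \<in> PM V" "m (Inr c) * m (Inl e) \<noteq> 0"
  shows "e \<in> Bedges c"
proof -
  obtain q c0 where qc: "m = chi_EC V q c0" "perfect_matching_B V c0 q" using PM_E[OF assms(1)] by blast
  then have "c = c0" "e \<in> q" using assms(2) by (auto simp: chi_EC_def split: if_splits)
  then show ?thesis using qc(2) unfolding perfect_matching_B_def by blast
qed

lemma PM_le1:
  assumes "m \<in> PM V"
  shows "m i \<le> 1"
proof -
  obtain q c where "m = chi_EC V q c" using PM_E[OF assms] by blast
  then show ?thesis using chi_le1 by simp
qed

lemma PM_degree:
  assumes "finite V" "m \<in> PM V" "a \<in> V"
  shows "(\<Sum>b\<in>V - {a}. m (Inl {a, b})) = 1"
proof -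
  obtain q c where qc: "m = chi_EC V q c" "c \<in> Cset V" "perfect_matching_B V c q"
    using PM_E[OF assms(2)] by blast
  have "(\<Sum>b\<in>V - {a}. m (Inl {a, b})) = (\<Sum>b\<in>V - {a}. if {a, b} \<in> q then 1 else 0)"
  proof (rule sum.cong[OF refl])
    fix b assume "b \<in> V - {a}"
    then have "{a, b} \<in> Kset V" using assms(3) by (intro Kset_pair) auto
    then show "m (Inl {a, b}) = (if {a, b} \<in> q then 1 else 0)" using qc(1) by (simp add: chi_Inl)
  qed
  also have "\<dots> = 1" by (rule perfect_matching_row_sum[OF assms(1) qc(2,3) assms(3)])
  finally show ?thesis .
qed

lemma PM_class_total:
  assumes "finite V" "m \<in> PM V"
  shows "(\<Sum>c\<in>Cset V. m (Inr c)) = 1"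
proof -
  obtain q c where qc: "m = chi_EC V q c" "c \<in> Cset V"
    using PM_E[OF assms(2)] by blast
  have "(\<Sum>c'\<in>Cset V. m (Inr c')) = (\<Sum>c'\<in>Cset V. if c' = c then 1 else 0)"
    using qc(1) by (intro sum.cong) (auto simp: chi_Inr)
  also have "\<dots> = 1" using qc(2) finite_Cset[OF assms(1)] by simp
  finally show ?thesis .
qed

lemma Ncomb_zero: "(\<lambda>i. 0) \<in> Ncomb M"
  unfolding Ncomb_def by (rule CollectI, rule exI[of _ "{}"]) auto

lemma Ncomb_elem: "m \<in> M \<Longrightarrow> m \<in> Ncomb M"
  unfolding Ncomb_def by (rule CollectI, rule exI[of _ "{m}"], rule exI[of _ "\<lambda>_. 1"]) auto

lemma Ncomb_add:
  assumes "v1 \<in> Ncomb M" "v2 \<in> Ncomb M"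
  shows "(\<lambda>i. v1 i + v2 i) \<in> Ncomb M"
proof -
  obtain S1 c1 where 1: "finite S1" "S1 \<subseteq> M" "v1 = (\<lambda>i. \<Sum>m\<in>S1. c1 m * m i)"
    using assms(1) by (auto simp: Ncomb_def)
  obtain S2 c2 where 2: "finite S2" "S2 \<subseteq> M" "v2 = (\<lambda>i. \<Sum>m\<in>S2. c2 m * m i)"
    using assms(2) by (auto simp: Ncomb_def)
  define c where "c m = (if m \<in> S1 then c1 m else 0) + (if m \<in> S2 then c2 m else 0)" for m
  have "(\<Sum>m\<in>S1. c1 m * m i) = (\<Sum>m\<in>S1 \<union> S2. (if m \<in> S1 then c1 m else 0) * m i)"
    and "(\<Sum>m\<in>S2. c2 m * m i) = (\<Sum>m\<in>S1 \<union> S2. (if m \<in> S2 then c2 m else 0) * m i)" for i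
    using 1(1) 2(1) by (intro sum.mono_neutral_cong_left; auto)+
  then have "(\<lambda>i. v1 i + v2 i) = (\<lambda>i. \<Sum>m\<in>S1 \<union> S2. c m * m i)"
    unfolding 1(3) 2(3) c_def by (simp add: sum.distrib distrib_right)
  then show ?thesis unfolding Ncomb_def using 1 2 by blast
qed

lemma Ncomb_sum:
  "finite D \<Longrightarrow> \<forall>d\<in>D. g d \<in> Ncomb M \<Longrightarrow> (\<lambda>i. \<Sum>d\<in>D. g d i) \<in> Ncomb M"
proof (induction D rule: finite_induct)
  case empty then show ?case using Ncomb_zero by simp
next
  case (insert x F)
  then show ?case using Ncomb_add[of "g x" M "\<lambda>i. \<Sum>d\<in>F. g d i"] by simp
qed

lemma Ncomb_sum_list:
  "\<forall>q\<in>set Qs. g q \<in> Ncomb M \<Longrightarrow> (\<lambda>i. \<Sum>q\<leftarrow>Qs. g q i) \<in> Ncomb M"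
proof (induction Qs)
  case Nil then show ?case using Ncomb_zero by simp
next
  case (Cons a Qs)
  then show ?case using Ncomb_add[of "g a" M "\<lambda>i. \<Sum>q\<leftarrow>Qs. g q i"] by simp
qed

lemma Ncomb_msetE:
  assumes "v \<in> Ncomb M"
  obtains Ms where "set_mset Ms \<subseteq> M" "\<And>i. v i = (\<Sum>m\<in>#Ms. m i)"
proof -
  obtain S coef where S: "finite S" "S \<subseteq> M" "v = (\<lambda>i. \<Sum>m\<in>S. coef m * m i)"
    using assms by (auto simp: Ncomb_def)
  define Ms where "Ms = (\<Sum>m\<in>S. replicate_mset (coef m) m)"
  have "set_mset Ms \<subseteq> S"
    unfolding Ms_def using S(1) by (induction S rule: finite_induct) auto
  have sum: "(\<Sum>m\<in>#Ms. m i) = (\<Sum>m\<in>S. coef m * m i)" for i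
    unfolding Ms_def using S(1) by (induction S rule: finite_induct) auto
  show ?thesis
  proof (rule that)
    show "set_mset Ms \<subseteq> M" using \<open>set_mset Ms \<subseteq> S\<close> S(2) by (rule order_trans)
    show "v i = (\<Sum>m\<in>#Ms. m i)" for i unfolding sum S(3) ..
  qed
qed

definition table_vector :: "'a set \<Rightarrow> 'a set set \<Rightarrow> nat \<Rightarrow> (nat \<Rightarrow> 'a set set) \<Rightarrow> 'a vec" where
  "table_vector V E r HA = (\<lambda>i. case i of
       Inl e \<Rightarrow> (if e \<in> Kset V \<and> e \<in> E then 1 else 0)
     | Inr c \<Rightarrow> (if c \<in> Cset V then card {d\<in>{1..r}. HA d = c} else 0))"

definition HA_factorization ::
    "'a set \<Rightarrow> 'a set set \<Rightarrow> nat \<Rightarrow> (nat \<Rightarrow> 'a set set) \<Rightarrow> (nat \<Rightarrow> 'a set set) \<Rightarrow> bool" where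
  "HA_factorization V E r HA q \<longleftrightarrow>
     (\<forall>d\<in>{1..r}. perfect_matching_B V (HA d) (q d)) \<and>
     (\<forall>e\<in>Kset V. card {d\<in>{1..r}. e \<in> q d} = (if e \<in> E then 1 else 0))"

lemma table_vector_support: "i \<notin> idx V \<Longrightarrow> table_vector V E r HA i = 0"
  by (cases i) (auto simp: table_vector_def idx_def)

lemma scaled_table_vector:
  assumes HA: "HAP_table V r HA"
    and Qs: "\<forall>d\<in>{1..r}. length (Qs d) = N \<and> (\<forall>q\<in>set (Qs d). perfect_matching_B V (HA d) q)"
    and cover: "\<forall>e\<in>Kset V. (\<Sum>d = 1..r. \<Sum>q\<leftarrow>Qs d. if e \<in> q then 1 else 0) = N * (if e \<in> E then 1 else 0)"
  shows "(\<lambda>i. N * table_vector V E r HA i) \<in> Ncomb (PM V)"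
proof -
  define g where "g = (\<lambda>i. \<Sum>d\<in>{1..r}. \<Sum>q\<leftarrow>Qs d. chi_EC V q (HA d) i)"
  have gN: "g \<in> Ncomb (PM V)"
    unfolding g_def
  proof (rule Ncomb_sum)
    show "\<forall>d\<in>{1..r}. (\<lambda>i. \<Sum>q\<leftarrow>Qs d. chi_EC V q (HA d) i) \<in> Ncomb (PM V)"
    proof (intro ballI Ncomb_sum_list)
      fix d q assume "d \<in> {1..r}" "q \<in> set (Qs d)"
      then show "chi_EC V q (HA d) \<in> Ncomb (PM V)"
        using HA Qs by (intro Ncomb_elem PM_I) (auto simp: HAP_table_def)
    qed
  qed simp
  have g: "g i = N * table_vector V E r HA i" for i
  proof (cases i)
    case (Inl e)
    show ?thesis
    proof (cases "e \<in> Kset V")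
      case True
      then show ?thesis using cover Inl by (simp add: g_def chi_Inl table_vector_def)
    qed (simp add: Inl g_def table_vector_def chi_EC_def)
  next
    case (Inr c)
    show ?thesis
    proof (cases "c \<in> Cset V")
      case True
      have "g i = (\<Sum>d\<in>{1..r}. N * (if HA d = c then 1 else 0))"
        unfolding g_def Inr using True Qs
        by (intro sum.cong refl) (auto simp: chi_Inr map_replicate_const sum_list_replicate)
      also have "\<dots> = N * card {d\<in>{1..r}. HA d = c}"
        by (simp add: sum_distrib_left[symmetric] sum_indicator)
      finally show ?thesis using True Inr by (simp add: table_vector_def)
    qed (simp add: Inr g_def table_vector_def chi_EC_def)
  qed
  have "(\<lambda>i. N * table_vector V E r HA i) = g" by (rule ext) (simp add: g)
  then show ?thesis using gN by simp
qed

lemma factorization_Ncomb: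
  assumes HA: "HAP_table V r HA" and q: "HA_factorization V E r HA q"
  shows "table_vector V E r HA \<in> Ncomb (PM V)"
proof -
  have "(\<lambda>i. 1 * table_vector V E r HA i) \<in> Ncomb (PM V)"
  proof (rule scaled_table_vector[OF HA, where Qs = "\<lambda>d. [q d]"])
    show "\<forall>d\<in>{1..r}. length [q d] = 1 \<and> (\<forall>q'\<in>set [q d]. perfect_matching_B V (HA d) q')"
      using q by (simp add: HA_factorization_def)
    show "\<forall>e\<in>Kset V. (\<Sum>d = 1..r. \<Sum>q'\<leftarrow>[q d]. if e \<in> q' then 1 else 0) = (1::nat) * (if e \<in> E then 1 else 0)"
    proof
      fix e assume "e \<in> Kset V"
      then have "card {d\<in>{1..r}. e \<in> q d} = (if e \<in> E then 1 else 0)"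
        using q by (simp add: HA_factorization_def)
      moreover have "(\<Sum>d = 1..r. if e \<in> q d then 1 else 0) = card {d\<in>{1..r}. e \<in> q d}"
        using sum_indicator[where 'n=nat, of "{1..r}" "\<lambda>d. e \<in> q d"] by simp
      ultimately show "(\<Sum>d = 1..r. \<Sum>q'\<leftarrow>[q d]. if e \<in> q' then 1 else 0) = (1::nat) * (if e \<in> E then 1 else 0)"
        by simp
    qed
  qed
  then show ?thesis by simp
qed

lemma mset_PM_class_member:
  assumes M: "set_mset M \<subseteq> PM V" and c: "c \<in> Cset V" and pos: "(\<Sum>m\<in>#M. m (Inr c)) \<noteq> 0"
  obtains q M' where "M = add_mset (chi_EC V q c) M'" "perfect_matching_B V c q"
    "\<And>c'. c' \<in> Cset V \<Longrightarrow> (\<Sum>m\<in>#M. m (Inr c')) = (if c' = c then 1 else 0) + (\<Sum>m\<in>#M'. m (Inr c'))"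
    "\<And>e. e \<in> Kset V \<Longrightarrow> (\<Sum>m\<in>#M. m (Inl e)) = (if e \<in> q then 1 else 0) + (\<Sum>m\<in>#M'. m (Inl e))"
proof -
  obtain m where m: "m \<in># M" "m (Inr c) \<noteq> 0" using pos by (auto simp: sum_mset_0_iff)
  then obtain q c0 where qc: "m = chi_EC V q c0" "perfect_matching_B V c0 q"
    using M PM_E by blast
  have "c0 = c" using m(2) qc(1) c by (simp add: chi_Inr split: if_splits)
  define M' where "M' = M - {#chi_EC V q c#}"
  have M': "M = add_mset (chi_EC V q c) M'" using m(1) qc(1) \<open>c0 = c\<close> by (simp add: M'_def)
  show ?thesis
  proof (rule that[OF M'])
    show "perfect_matching_B V c q" using qc(2) \<open>c0 = c\<close> by simp
    show "(\<Sum>m\<in>#M. m (Inr c')) = (if c' = c then 1 else 0) + (\<Sum>m\<in>#M'. m (Inr c'))"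
      if "c' \<in> Cset V" for c' using that by (simp add: M' chi_Inr)
    show "(\<Sum>m\<in>#M. m (Inl e)) = (if e \<in> q then 1 else 0) + (\<Sum>m\<in>#M'. m (Inl e))"
      if "e \<in> Kset V" for e using that by (simp add: M' chi_Inl)
  qed
qed

lemma mset_PM_no_class:
  assumes M: "set_mset M \<subseteq> PM V" and zero: "\<forall>c\<in>Cset V. (\<Sum>m\<in>#M. m (Inr c)) = 0"
  shows "M = {#}"
proof (rule ccontr)
  assume "M \<noteq> {#}"
  then obtain m M' where M': "M = add_mset m M'" by (metis multiset_cases)
  then have "m \<in> PM V" using M by simp
  then obtain q c where qc: "m = chi_EC V q c" "c \<in> Cset V" by (rule PM_E)
  have "(\<Sum>m\<in>#M. m (Inr c)) = 1 + (\<Sum>m\<in>#M'. m (Inr c))" using qc by (simp add: M' chi_Inr)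
  then show False using zero qc(2) by simp
qed

lemma assign_matchings:
  fixes r :: nat
  shows "set_mset M \<subseteq> PM V \<Longrightarrow> \<forall>d\<in>{1..r}. HA d \<in> Cset V \<Longrightarrow>
    \<forall>c\<in>Cset V. (\<Sum>m\<in>#M. m (Inr c)) = card {d\<in>{1..r}. HA d = c} \<Longrightarrow>
    \<exists>q. (\<forall>d\<in>{1..r}. perfect_matching_B V (HA d) (q d)) \<and>
        (\<forall>e\<in>Kset V. card {d\<in>{1..r}. e \<in> q d} = (\<Sum>m\<in>#M. m (Inl e)))"
proof (induction r arbitrary: M)
  case 0
  then have "M = {#}" using mset_PM_no_class[OF 0(1)] by simp
  then show ?case by simp
next
  case (Suc r)
  define c where "c = HA (Suc r)"
  have c: "c \<in> Cset V" using Suc.prems(2) by (simp add: c_def)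
  have "card {d\<in>{1..Suc r}. HA d = c} \<noteq> 0"
    using card_atLeastAtMost_Suc[of r "\<lambda>d. HA d = c"] by (simp add: c_def)
  then have pos: "(\<Sum>m\<in>#M. m (Inr c)) \<noteq> 0" using Suc.prems(3) c by simp
  obtain q0 M' where q0: "M = add_mset (chi_EC V q0 c) M'" "perfect_matching_B V c q0"
    "\<And>c'. c' \<in> Cset V \<Longrightarrow> (\<Sum>m\<in>#M. m (Inr c')) = (if c' = c then 1 else 0) + (\<Sum>m\<in>#M'. m (Inr c'))"
    "\<And>e. e \<in> Kset V \<Longrightarrow> (\<Sum>m\<in>#M. m (Inl e)) = (if e \<in> q0 then 1 else 0) + (\<Sum>m\<in>#M'. m (Inl e))"
    using mset_PM_class_member[OF Suc.prems(1) c pos] by blast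
  have "set_mset M' \<subseteq> PM V" using Suc.prems(1) q0(1) by auto
  moreover have "\<forall>d\<in>{1..r}. HA d \<in> Cset V" using Suc.prems(2) by simp
  moreover have "\<forall>c'\<in>Cset V. (\<Sum>m\<in>#M'. m (Inr c')) = card {d\<in>{1..r}. HA d = c'}"
  proof
    fix c' assume c': "c' \<in> Cset V"
    have "(if c' = c then 1 else 0) = (if HA (Suc r) = c' then 1 else (0::nat))" by (auto simp: c_def)
    then show "(\<Sum>m\<in>#M'. m (Inr c')) = card {d\<in>{1..r}. HA d = c'}"
      using Suc.prems(3) q0(3)[OF c'] c' card_atLeastAtMost_Suc[of r "\<lambda>d. HA d = c'"] by simp
  qed
  ultimately obtain q where q: "\<forall>d\<in>{1..r}. perfect_matching_B V (HA d) (q d)"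
      "\<forall>e\<in>Kset V. card {d\<in>{1..r}. e \<in> q d} = (\<Sum>m\<in>#M'. m (Inl e))"
    using Suc.IH by blast
  define q' where "q' = q(Suc r := q0)"
  have "\<forall>d\<in>{1..Suc r}. perfect_matching_B V (HA d) (q' d)"
    using q(1) q0(2) by (auto simp: q'_def c_def le_Suc_eq)
  moreover have "card {d\<in>{1..Suc r}. e \<in> q' d} = (\<Sum>m\<in>#M. m (Inl e))" if e: "e \<in> Kset V" for e
  proof -
    have "{d\<in>{1..r}. e \<in> q' d} = {d\<in>{1..r}. e \<in> q d}" by (auto simp: q'_def)
    then have "card {d\<in>{1..Suc r}. e \<in> q' d} = card {d\<in>{1..r}. e \<in> q d} + (if e \<in> q0 then 1 else 0)"
      using card_atLeastAtMost_Suc[of r "\<lambda>d. e \<in> q' d"] by (simp add: q'_def)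
    then show ?thesis using q(2) q0(4) e by simp
  qed
  ultimately show ?case by blast
qed

lemma Ncomb_factorization:
  assumes HA: "HAP_table V r HA" and v: "table_vector V E r HA \<in> Ncomb (PM V)"
  shows "\<exists>q. HA_factorization V E r HA q"
proof -
  obtain M where M: "set_mset M \<subseteq> PM V" "\<And>i. table_vector V E r HA i = (\<Sum>m\<in>#M. m i)"
    using Ncomb_msetE[OF v] by blast
  have "\<forall>c\<in>Cset V. (\<Sum>m\<in>#M. m (Inr c)) = card {d\<in>{1..r}. HA d = c}"
    using M(2)[of "Inr _", symmetric] by (simp add: table_vector_def)
  then obtain q where "\<forall>d\<in>{1..r}. perfect_matching_B V (HA d) (q d)"
      "\<forall>e\<in>Kset V. card {d\<in>{1..r}. e \<in> q d} = (\<Sum>m\<in>#M. m (Inl e))"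
    using assign_matchings[OF M(1)] HA unfolding HAP_table_def by blast
  then have "HA_factorization V E r HA q"
    using M(2)[of "Inl _", symmetric] by (simp add: HA_factorization_def table_vector_def)
  then show ?thesis by blast
qed

lemma PGHA_D:
  assumes "x \<in> PGHA V E r HA"
  shows PGHA_outside: "\<And>e d. \<not> (e \<in> Kset V \<and> d \<in> {1..r}) \<Longrightarrow> x e d = 0"
    and PGHA_edge_sum: "\<And>e. e \<in> E \<Longrightarrow> (\<Sum>d = 1..r. x e d) = 1"
    and PGHA_non_edge: "\<And>e d. e \<in> Kset V - E \<Longrightarrow> d \<in> {1..r} \<Longrightarrow> x e d = 0"
    and PGHA_row_sum: "\<And>d a. d \<in> {1..r} \<Longrightarrow> a \<in> V \<Longrightarrow> (\<Sum>b \<in> V - {a}. x {a, b} d) = 1"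
    and PGHA_bounds: "\<And>e d. e \<in> E \<Longrightarrow> d \<in> {1..r} \<Longrightarrow> 0 \<le> x e d \<and> x e d \<le> 1"
    and PGHA_same_side: "\<And>a b d. {a, b} \<in> E \<Longrightarrow> d \<in> {1..r} \<Longrightarrow> \<exists>S \<in> HA d. a \<in> S \<and> b \<in> S \<Longrightarrow>
                           x {a, b} d = 0"
  using assms unfolding PGHA_def mem_Collect_eq by simp_all

lemma PGHA_nonneg:
  assumes "x \<in> PGHA V E r HA"
  shows "0 \<le> x e d"
  using PGHA_D[OF assms] by (cases "e \<in> Kset V \<and> d \<in> {1..r}"; cases "e \<in> E") auto

lemma PGHA_support:
  assumes x: "x \<in> PGHA V E r HA" and EK: "E \<subseteq> Kset V"
    and d: "d \<in> {1..r}" "HA d \<in> Cset V" and nz: "x e d \<noteq> 0"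
  shows "e \<in> E" "e \<in> Bedges (HA d)"
proof -
  have "e \<in> Kset V" using PGHA_outside[OF x] d(1) nz by blast
  then show eE: "e \<in> E" using PGHA_non_edge[OF x] d(1) nz by blast
  then obtain a b where ab: "e = {a, b}" "a \<in> V" "b \<in> V" using EK unfolding Kset_def by blast
  then have "\<not> (\<exists>S\<in>HA d. a \<in> S \<and> b \<in> S)" using PGHA_same_side[OF x] eE d(1) nz by blast
  then show "e \<in> Bedges (HA d)" using Bedges_iff[OF d(2)] ab by simp
qed

lemma factorization_integral_point:
  assumes fin: "finite V" and EK: "E \<subseteq> Kset V" and HA: "HAP_table V r HA"
    and q: "HA_factorization V E r HA q"
  defines "x \<equiv> \<lambda>e d. if e \<in> Kset V \<and> d \<in> {1..r} then (if e \<in> q d then 1 else 0) else (0::real)"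
  shows "x \<in> PGHA V E r HA" "integral_point x"
proof -
  have pm: "perfect_matching_B V (HA d) (q d)" "HA d \<in> Cset V" if "d \<in> {1..r}" for d
    using q HA that by (auto simp: HA_factorization_def HAP_table_def)
  have col: "(\<Sum>d = 1..r. x e d) = real (card {d\<in>{1..r}. e \<in> q d})" if "e \<in> Kset V" for e
    using that by (simp add: x_def sum_indicator)
  have cnt: "card {d\<in>{1..r}. e \<in> q d} = (if e \<in> E then 1 else 0)" if "e \<in> Kset V" for e
    using q that by (simp add: HA_factorization_def)
  show "x \<in> PGHA V E r HA"
    unfolding PGHA_def mem_Collect_eq
  proof (intro conjI allI ballI impI)
    fix e assume "e \<in> E" then show "(\<Sum>d = 1..r. x e d) = 1" using EK col cnt by auto
  next
    fix e d assume e: "e \<in> Kset V - E" and d: "d \<in> {1..r}"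
    then have "card {d\<in>{1..r}. e \<in> q d} = 0" using cnt by simp
    then show "x e d = 0" using d by (simp add: x_def)
  next
    fix d a assume d: "d \<in> {1..r}" and a: "a \<in> V"
    have "(\<Sum>b \<in> V - {a}. x {a, b} d) = (\<Sum>b \<in> V - {a}. if {a, b} \<in> q d then 1 else 0)"
      using d a by (intro sum.cong) (auto simp: x_def intro: Kset_pair)
    also have "\<dots> = 1" using perfect_matching_row_sum[OF fin pm(2)[OF d] pm(1)[OF d] a] .
    finally show "(\<Sum>b \<in> V - {a}. x {a, b} d) = 1" .
  next
    fix a b d assume h: "{a, b} \<in> E \<and> d \<in> {1..r} \<and> (\<exists>S\<in>HA d. a \<in> S \<and> b \<in> S)"
    then have "{a, b} \<notin> Bedges (HA d)" using Bedges_iff[OF pm(2)] by blast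
    then have "{a, b} \<notin> q d" using pm(1) h unfolding perfect_matching_B_def by blast
    then show "x {a, b} d = 0" by (simp add: x_def)
  qed (auto simp: x_def)
  show "integral_point x" unfolding integral_point_def x_def by auto
qed

lemma integral_point_indicator:
  assumes x: "x \<in> PGHA V E r HA" and xi: "integral_point x" and e: "e \<in> Kset V" and d: "d \<in> {1..r}"
  shows "x e d = (if e \<in> E \<and> x e d = 1 then 1 else 0)"
proof (cases "e \<in> E")
  case True
  have "x e d \<in> \<int>" using xi by (simp add: integral_point_def)
  then obtain z where z: "x e d = of_int z" by (rule Ints_cases)
  have "0 \<le> x e d" "x e d \<le> 1" using PGHA_bounds[OF x True d] by auto
  then have "0 \<le> z" "z \<le> 1" unfolding z by simp_all
  then have "z = 0 \<or> z = 1" by arith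
  then show ?thesis using z True by auto
qed (use PGHA_non_edge[OF x] e d in auto)

lemma integral_point_colour_class:
  assumes fin: "finite V" and EK: "E \<subseteq> Kset V" and x: "x \<in> PGHA V E r HA" and xi: "integral_point x"
    and d: "d \<in> {1..r}" "HA d \<in> Cset V"
  shows "perfect_matching_B V (HA d) {e\<in>E. x e d = 1}"
proof -
  have qB: "{e\<in>E. x e d = 1} \<subseteq> Bedges (HA d)" using PGHA_support(2)[OF x EK d] by auto
  have "card {b\<in>V - {a}. {a, b} \<in> {e\<in>E. x e d = 1}} = 1" if a: "a \<in> V" for a
  proof -
    have "(\<Sum>b \<in> V - {a}. x {a, b} d) = (\<Sum>b \<in> V - {a}. if {a, b} \<in> {e\<in>E. x e d = 1} then 1 else 0)"
    proof (rule sum.cong[OF refl])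
      fix b assume "b \<in> V - {a}"
      then have "{a, b} \<in> Kset V" using a by (intro Kset_pair) auto
      then show "x {a, b} d = (if {a, b} \<in> {e\<in>E. x e d = 1} then 1 else 0)"
        using integral_point_indicator[OF x xi _ d(1)] by simp
    qed
    then have "real (card {b\<in>V - {a}. {a, b} \<in> {e\<in>E. x e d = 1}}) = 1"
      using PGHA_row_sum[OF x d(1) a] fin by (simp add: sum_indicator)
    then show ?thesis by simp
  qed
  then show ?thesis using perfect_matching_iff_degree_one[OF d(2) qB] by simp
qed

lemma integral_point_factorization:
  assumes fin: "finite V" and EK: "E \<subseteq> Kset V" and HA: "HAP_table V r HA"
    and x: "x \<in> PGHA V E r HA" and xi: "integral_point x"
  shows "HA_factorization V E r HA (\<lambda>d. {e\<in>E. x e d = 1})"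
proof -
  have "card {d\<in>{1..r}. e \<in> E \<and> x e d = 1} = (if e \<in> E then 1 else 0)" if e: "e \<in> Kset V" for e
  proof (cases "e \<in> E")
    case True
    have "(\<Sum>d = 1..r. x e d) = (\<Sum>d = 1..r. if e \<in> E \<and> x e d = 1 then 1 else 0)"
      using integral_point_indicator[OF x xi e] by (intro sum.cong) auto
    then have "(\<Sum>d = 1..r. x e d) = real (card {d\<in>{1..r}. e \<in> E \<and> x e d = 1})"
      by (simp add: sum_indicator)
    then show ?thesis using PGHA_edge_sum[OF x True] True by simp
  qed simp
  moreover have "\<forall>d\<in>{1..r}. perfect_matching_B V (HA d) {e\<in>E. x e d = 1}"
    using integral_point_colour_class[OF fin EK x xi] HA by (simp add: HAP_table_def)
  ultimately show ?thesis unfolding HA_factorization_def by simp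
qed

lemma integral_point_iff_factorization:
  assumes "finite V" "E \<subseteq> Kset V" "HAP_table V r HA"
  shows "(\<exists>x\<in>PGHA V E r HA. integral_point x) \<longleftrightarrow> (\<exists>q. HA_factorization V E r HA q)"
proof
  assume "\<exists>x\<in>PGHA V E r HA. integral_point x"
  then obtain x where "x \<in> PGHA V E r HA" "integral_point x" by blast
  then show "\<exists>q. HA_factorization V E r HA q" using integral_point_factorization[OF assms] by blast
next
  assume "\<exists>q. HA_factorization V E r HA q"
  then obtain q where q: "HA_factorization V E r HA q" ..
  show "\<exists>x\<in>PGHA V E r HA. integral_point x"
    using factorization_integral_point[OF assms q] by blast
qed

(* P(G,HA) as a finite system of rational linear inequalities in the variables
   (e, d) \<in> K \<times> {1..r}; an equation a\<cdot>x = b is encoded by the two inequalities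
   a\<cdot>x \<le> b and -a\<cdot>x \<le> -b. *)
definition ind :: "'v set \<Rightarrow> 'v \<Rightarrow> real" where
  "ind T = (\<lambda>p. if p \<in> T then 1 else 0)"

definition eqc :: "('v \<Rightarrow> real) \<Rightarrow> real \<Rightarrow> (('v \<Rightarrow> real) \<times> real) set" where
  "eqc a b = {(a, b), (\<lambda>p. - a p, - b)}"

definition PGHA_system :: "'a set \<Rightarrow> 'a set set \<Rightarrow> nat \<Rightarrow> (nat \<Rightarrow> 'a set set)
                             \<Rightarrow> ((('a set \<times> nat) \<Rightarrow> real) \<times> real) set" where
  "PGHA_system V E r HA =
     (\<Union>e\<in>E. eqc (ind ((\<lambda>d. (e, d)) ` {1..r})) 1)
   \<union> (\<Union>p\<in>(Kset V - E) \<times> {1..r}. eqc (ind {p}) 0)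
   \<union> (\<Union>p\<in>{1..r} \<times> V. eqc (ind ((\<lambda>b. ({snd p, b}, fst p)) ` (V - {snd p}))) 1)
   \<union> (\<Union>p\<in>E \<times> {1..r}. {(\<lambda>q. - ind {p} q, 0), (ind {p}, 1)})
   \<union> (\<Union>p\<in>{p \<in> E \<times> {1..r}. \<exists>a b. fst p = {a, b} \<and> (\<exists>S\<in>HA (snd p). a \<in> S \<and> b \<in> S)}.
        eqc (ind {p}) 0)"

lemma lin_ind:
  assumes "finite I" "\<forall>p. p \<notin> I \<longrightarrow> X p = 0" "finite T"
  shows "lin I (ind T) X = sum X T"
proof -
  have "lin I (ind T) X = (\<Sum>p\<in>I. if p \<in> T then X p else 0)"
    unfolding lin_def ind_def by (intro sum.cong) auto
  also have "\<dots> = sum X (I \<inter> T)" using assms(1) by (simp add: sum.If_cases Int_def)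
  also have "\<dots> = sum X T" using assms by (intro sum.mono_neutral_left) auto
  finally show ?thesis .
qed

lemma lin_neg: "lin I (\<lambda>p. - a p) X = - lin I a X"
  unfolding lin_def by (simp add: sum_negf)

lemma sat_eqc: "(\<forall>c\<in>eqc a b. lin I (fst c) X \<le> snd c) \<longleftrightarrow> lin I a X = b"
  unfolding eqc_def by (auto simp: lin_neg)

lemma same_side_zero_iff:
  "(\<forall>p\<in>{p \<in> E \<times> {1..r}. \<exists>a b. fst p = {a, b} \<and> (\<exists>S\<in>HA (snd p). a \<in> S \<and> b \<in> S)}. x (fst p) (snd p) = 0)
   \<longleftrightarrow> (\<forall>a b d. {a, b} \<in> E \<and> d \<in> {1..r} \<and> (\<exists>S \<in> HA d. a \<in> S \<and> b \<in> S) \<longrightarrow> x {a, b} d = 0)"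
  (is "?L \<longleftrightarrow> ?R")
proof
  assume L: ?L
  show ?R
  proof (intro allI impI)
    fix a b d assume "{a, b} \<in> E \<and> d \<in> {1..r} \<and> (\<exists>S \<in> HA d. a \<in> S \<and> b \<in> S)"
    then have "({a, b}, d) \<in> {p \<in> E \<times> {1..r}. \<exists>a b. fst p = {a, b} \<and> (\<exists>S\<in>HA (snd p). a \<in> S \<and> b \<in> S)}"
      by auto
    then show "x {a, b} d = 0" using L by fastforce
  qed
qed auto

lemma PGHA_system_iff:
  assumes fin: "finite V" and z: "\<forall>e d. \<not> (e \<in> Kset V \<and> d \<in> {1..r}) \<longrightarrow> x e d = 0"
  shows "x \<in> PGHA V E r HA \<longleftrightarrow>
    (\<forall>c\<in>PGHA_system V E r HA. lin (Kset V \<times> {1..r}) (fst c) (\<lambda>p. x (fst p) (snd p)) \<le> snd c)"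
proof -
  define I where "I = Kset V \<times> {1..r}"
  define X where "X = (\<lambda>p. x (fst p) (snd p))"
  have finI: "finite I" unfolding I_def using finite_Kset[OF fin] by simp
  have zX: "\<forall>p. p \<notin> I \<longrightarrow> X p = 0" using z unfolding I_def X_def by auto
  have L: "lin I (ind T) X = sum X T" if "finite T" for T using lin_ind[OF finI zX that] .
  have s1: "sum X ((\<lambda>d. (e, d)) ` {1..r}) = (\<Sum>d = 1..r. x e d)" for e
    by (subst sum.reindex) (auto simp: inj_on_def X_def)
  have s3: "sum X ((\<lambda>b. ({a, b}, d)) ` (V - {a})) = (\<Sum>b\<in>V - {a}. x {a, b} d)" for a d
    by (subst sum.reindex) (auto simp: inj_on_def X_def doubleton_eq_iff)
  have A1: "(\<forall>c\<in>(\<Union>e\<in>E. eqc (ind ((\<lambda>d. (e, d)) ` {1..r})) 1). lin I (fst c) X \<le> snd c) \<longleftrightarrow>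
        (\<forall>e\<in>E. (\<Sum>d = 1..r. x e d) = 1)"
    by (simp only: ball_UN sat_eqc L[OF finite_imageI[OF finite_atLeastAtMost]] s1)
  have A2: "(\<forall>c\<in>(\<Union>p\<in>(Kset V - E) \<times> {1..r}. eqc (ind {p}) 0). lin I (fst c) X \<le> snd c) \<longleftrightarrow>
        (\<forall>e\<in>Kset V - E. \<forall>d\<in>{1..r}. x e d = 0)"
    by (simp only: ball_UN sat_eqc L[OF finite.insertI[OF finite.emptyI]]) (simp add: X_def)
  have A3: "(\<forall>c\<in>(\<Union>p\<in>{1..r} \<times> V. eqc (ind ((\<lambda>b. ({snd p, b}, fst p)) ` (V - {snd p}))) 1).
          lin I (fst c) X \<le> snd c) \<longleftrightarrow> (\<forall>d\<in>{1..r}. \<forall>a\<in>V. (\<Sum>b\<in>V - {a}. x {a, b} d) = 1)"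
    by (simp only: ball_UN sat_eqc L[OF finite_imageI[OF finite_Diff[OF fin]]] s3) (auto simp: Ball_def)
  have A4: "(\<forall>c\<in>(\<Union>p\<in>E \<times> {1..r}. {(\<lambda>q. - ind {p} q, 0), (ind {p}, 1)}). lin I (fst c) X \<le> snd c) \<longleftrightarrow>
        (\<forall>e\<in>E. \<forall>d\<in>{1..r}. 0 \<le> x e d \<and> x e d \<le> 1)"
    using L by (auto simp: lin_neg X_def)
  have A5: "(\<forall>c\<in>(\<Union>p\<in>{p \<in> E \<times> {1..r}. \<exists>a b. fst p = {a, b} \<and> (\<exists>S\<in>HA (snd p). a \<in> S \<and> b \<in> S)}.
          eqc (ind {p}) 0). lin I (fst c) X \<le> snd c) \<longleftrightarrow>
        (\<forall>a b d. {a, b} \<in> E \<and> d \<in> {1..r} \<and> (\<exists>S \<in> HA d. a \<in> S \<and> b \<in> S) \<longrightarrow> x {a, b} d = 0)"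
    by (simp only: ball_UN sat_eqc L[OF finite.insertI[OF finite.emptyI]] same_side_zero_iff[symmetric])
       (simp add: X_def)
  show ?thesis
    unfolding PGHA_def mem_Collect_eq PGHA_system_def ball_Un A1 A2 A3 A4 A5 I_def[symmetric] X_def[symmetric]
    by (simp only: eqTrueI[OF z] conj_assoc simp_thms)
qed

lemma PGHA_rational_point:
  assumes fin: "finite V" and EK: "E \<subseteq> Kset V" and x0: "x0 \<in> PGHA V E r HA"
  shows "\<exists>x \<in> PGHA V E r HA. \<forall>e d. x e d \<in> \<rat>"
proof -
  define I where "I = Kset V \<times> {1..r}"
  have finI: "finite I" unfolding I_def using finite_Kset[OF fin] by simp
  have finCS: "finite (PGHA_system V E r HA)"
  proof -
    have "finite E" using EK finite_Kset[OF fin] finite_subset by blast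
    then show ?thesis using fin finite_Kset[OF fin] unfolding PGHA_system_def eqc_def by auto
  qed
  have ratCS: "\<forall>c\<in>PGHA_system V E r HA. (\<forall>i\<in>I. fst c i \<in> \<rat>) \<and> snd c \<in> \<rat>"
    unfolding PGHA_system_def eqc_def ind_def by auto
  have "\<forall>c\<in>PGHA_system V E r HA. lin I (fst c) (\<lambda>p. x0 (fst p) (snd p)) \<le> snd c"
    using PGHA_system_iff[OF fin] PGHA_outside[OF x0] x0 unfolding I_def by blast
  from rational_solution[OF finI finCS ratCS this]
  obtain Y where Y: "\<forall>i. Y i \<in> \<rat>" "\<forall>c\<in>PGHA_system V E r HA. lin I (fst c) Y \<le> snd c"
    by blast
  define x where "x e d = (if (e, d) \<in> I then Y (e, d) else 0)" for e d
  have z: "\<forall>e d. \<not> (e \<in> Kset V \<and> d \<in> {1..r}) \<longrightarrow> x e d = 0" by (auto simp: x_def I_def)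
  have "lin I a (\<lambda>p. x (fst p) (snd p)) = lin I a Y" for a
    unfolding lin_def by (intro sum.cong) (auto simp: x_def)
  then have "x \<in> PGHA V E r HA" using PGHA_system_iff[OF fin z] Y(2) unfolding I_def by simp
  moreover have "\<forall>e d. x e d \<in> \<rat>" using Y(1) by (auto simp: x_def)
  ultimately show ?thesis by blast
qed

lemma common_denominator:
  fixes f :: "'b \<Rightarrow> real"
  shows "finite A \<Longrightarrow> \<forall>a\<in>A. f a \<in> \<rat> \<Longrightarrow> \<exists>N::nat. N \<ge> 1 \<and> (\<forall>a\<in>A. real N * f a \<in> \<int>)"
proof (induction A rule: finite_induct)
  case empty then show ?case by (intro exI[of _ 1]) auto
next
  case (insert a0 A)
  obtain N where N: "N \<ge> 1" "\<forall>a\<in>A. real N * f a \<in> \<int>" using insert by auto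
  have "f a0 \<in> \<rat>" using insert.prems by auto
  then obtain p q where pq: "q > 0" "f a0 = of_int p / of_int q" by (rule Rats_cases') blast
  define N' where "N' = N * nat q"
  have rN': "real N' = real N * of_int q" using pq(1) by (simp add: N'_def)
  have "real N' * f a \<in> \<int>" if a: "a \<in> insert a0 A" for a
  proof (cases "a = a0")
    case True
    then have "real N' * f a = of_int (int N * p)" using pq rN' by simp
    then show ?thesis by simp
  next
    case False
    then have "a \<in> A" using a by simp
    have "real N' * f a = of_int q * (real N * f a)" using rN' by simp
    also have "\<dots> \<in> \<int>" using N(2) \<open>a \<in> A\<close> by (blast intro: Ints_mult[OF Ints_of_int])
    finally show ?thesis .
  qed
  moreover have "N' \<ge> 1" using N(1) pq(1) by (simp add: N'_def)
  ultimately show ?case by blast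
qed

lemma PGHA_integer_scaling:
  assumes fin: "finite V" and x: "x \<in> PGHA V E r HA" and rat: "\<forall>e d. x e d \<in> \<rat>"
  obtains N :: nat and w where "N \<ge> 1" "\<And>d e. real (w d e) = real N * x e d"
proof -
  have "finite (Kset V \<times> {1..r})" using finite_Kset[OF fin] by simp
  then obtain N :: nat where N: "N \<ge> 1" "\<forall>p\<in>Kset V \<times> {1..r}. real N * x (fst p) (snd p) \<in> \<int>"
    using common_denominator[of _ "\<lambda>p. x (fst p) (snd p)"] rat by blast
  have Nint: "real N * x e d \<in> \<int>" for e d
    using N(2) PGHA_outside[OF x, of e d] by (cases "e \<in> Kset V \<and> d \<in> {1..r}") auto
  define w where "w d e = nat \<lfloor>real N * x e d\<rfloor>" for d e
  have "real (w d e) = real N * x e d" for d e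
  proof -
    obtain z where z: "real N * x e d = of_int z" using Nint[of e d] by (auto elim: Ints_cases)
    have "0 \<le> real N * x e d" using PGHA_nonneg[OF x] by simp
    then show ?thesis unfolding w_def z by simp
  qed
  then show ?thesis using that N(1) by blast
qed

lemma scaled_colour_class:
  assumes x: "x \<in> PGHA V E r HA" and EK: "E \<subseteq> Kset V" and d: "d \<in> {1..r}" "HA d \<in> Cset V"
    and w: "\<And>e. real (w e) = real N * x e d"
  shows "\<forall>e. 0 < w e \<longrightarrow> e \<in> Bedges (HA d)" "\<forall>a\<in>V. (\<Sum>b\<in>V - {a}. w {a, b}) = N"
proof -
  show "\<forall>e. 0 < w e \<longrightarrow> e \<in> Bedges (HA d)"
  proof (intro allI impI)
    fix e assume "0 < w e"
    then have "x e d \<noteq> 0" using w[of e] by auto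
    then show "e \<in> Bedges (HA d)" by (rule PGHA_support(2)[OF x EK d])
  qed
  show "\<forall>a\<in>V. (\<Sum>b\<in>V - {a}. w {a, b}) = N"
  proof
    fix a assume a: "a \<in> V"
    have "real (\<Sum>b\<in>V - {a}. w {a, b}) = real N * (\<Sum>b\<in>V - {a}. x {a, b} d)"
      by (simp add: w sum_distrib_left)
    also have "\<dots> = real N" using PGHA_row_sum[OF x d(1) a] by simp
    finally show "(\<Sum>b\<in>V - {a}. w {a, b}) = N" by (simp only: of_nat_eq_iff)
  qed
qed

(* A rational point scaled by a common denominator N gives, for
   every entry d of the table, an N-regular multigraph on B_(HA d), which splits into N
   perfect matchings. *)
lemma table_vector_Nbar:
  assumes fin: "finite V" and EK: "E \<subseteq> Kset V" and HA: "HAP_table V r HA"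
    and ne: "PGHA V E r HA \<noteq> {}"
  shows "table_vector V E r HA \<in> Nbar V (PM V)"
proof -
  have HAd: "\<forall>d\<in>{1..r}. HA d \<in> Cset V" using HA by (simp add: HAP_table_def)
  obtain x where x: "x \<in> PGHA V E r HA" "\<forall>e d. x e d \<in> \<rat>"
    using ne PGHA_rational_point[OF fin EK] by blast
  obtain N :: nat and w where N: "N \<ge> 1" and w: "\<And>d e. real (w d e) = real N * x e d"
    using PGHA_integer_scaling[OF fin x] by blast
  have "\<forall>d\<in>{1..r}. \<exists>Qs. length Qs = N \<and> (\<forall>q\<in>set Qs. perfect_matching_B V (HA d) q) \<and>
           (\<forall>e. w d e = (\<Sum>q\<leftarrow>Qs. if e \<in> q then 1 else 0))"
    using regular_decomposition[OF fin] scaled_colour_class[OF x(1) EK _ _ w] HAd by blast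
  then obtain Qs where Qs: "\<forall>d\<in>{1..r}. length (Qs d) = N \<and> (\<forall>q\<in>set (Qs d). perfect_matching_B V (HA d) q)
      \<and> (\<forall>e. w d e = (\<Sum>q\<leftarrow>Qs d. if e \<in> q then 1 else 0))"
    by metis
  have "(\<Sum>d = 1..r. \<Sum>q\<leftarrow>Qs d. if e \<in> q then 1 else 0) = N * (if e \<in> E then 1 else 0)"
    if e: "e \<in> Kset V" for e
  proof -
    have "real (\<Sum>d = 1..r. \<Sum>q\<leftarrow>Qs d. if e \<in> q then 1 else 0) = real N * (\<Sum>d = 1..r. x e d)"
      using Qs by (simp add: w[symmetric] sum_distrib_left)
    also have "\<dots> = real (N * (if e \<in> E then 1 else 0))"
      using PGHA_edge_sum[OF x(1)] PGHA_non_edge[OF x(1)] e by auto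
    finally show ?thesis by (simp only: of_nat_eq_iff)
  qed
  then have "(\<lambda>i. N * table_vector V E r HA i) \<in> Ncomb (PM V)"
    using scaled_table_vector[OF HA] Qs by blast
  then show ?thesis using N table_vector_support unfolding Nbar_def by blast
qed

context
  fixes V :: "'a set" and S :: "'a vec set" and coef :: "'a vec \<Rightarrow> nat" and k :: nat and v :: "'a vec"
  assumes fin: "finite V" and S: "finite S" "S \<subseteq> PM V" and k: "k \<ge> 1"
    and kv: "\<And>i. k * v i = (\<Sum>m\<in>S. coef m * m i)"
begin

lemma class_total_eq_degree:
  assumes a: "a \<in> V"
  shows "(\<Sum>c\<in>Cset V. v (Inr c)) = (\<Sum>b\<in>V - {a}. v (Inl {a, b}))"
proof -
  have "k * (\<Sum>b\<in>V - {a}. v (Inl {a, b})) = (\<Sum>b\<in>V - {a}. \<Sum>m\<in>S. coef m * m (Inl {a, b}))"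
    by (simp add: sum_distrib_left kv)
  also have "\<dots> = (\<Sum>m\<in>S. coef m * (\<Sum>b\<in>V - {a}. m (Inl {a, b})))"
    by (simp add: sum.swap[of _ _ S] sum_distrib_left)
  also have "\<dots> = (\<Sum>m\<in>S. coef m)" using PM_degree[OF fin _ a] S(2) by (intro sum.cong) auto
  also have "\<dots> = (\<Sum>m\<in>S. coef m * (\<Sum>c\<in>Cset V. m (Inr c)))"
    using PM_class_total[OF fin] S(2) by (intro sum.cong) auto
  also have "\<dots> = (\<Sum>c\<in>Cset V. \<Sum>m\<in>S. coef m * m (Inr c))"
    by (simp add: sum.swap[of _ S] sum_distrib_left)
  also have "\<dots> = k * (\<Sum>c\<in>Cset V. v (Inr c))" by (simp add: sum_distrib_left kv)
  finally show ?thesis using k by simp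
qed

definition class_edge_weight :: "'a set set \<Rightarrow> 'a set \<Rightarrow> nat" where
  "class_edge_weight c e = (\<Sum>m\<in>S. coef m * m (Inr c) * m (Inl e))"

lemma class_edge_weight_le: "class_edge_weight c e \<le> k * v (Inr c)" "class_edge_weight c e \<le> k * v (Inl e)"
proof -
  have "coef m * m (Inr c) * m (Inl e) \<le> coef m * m (Inr c)"
    and "coef m * m (Inr c) * m (Inl e) \<le> coef m * m (Inl e)" if "m \<in> S" for m
    using PM_le1[of m V] S(2) that by (auto intro: mult_le_one simp: mult_le_cancel1)
  then show "class_edge_weight c e \<le> k * v (Inr c)" "class_edge_weight c e \<le> k * v (Inl e)"
    unfolding class_edge_weight_def kv by (auto intro: sum_mono)
qed

lemma class_edge_weight_support:
  assumes "class_edge_weight c e \<noteq> 0"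
  shows "e \<in> Bedges c"
proof -
  obtain m where m: "m \<in> S" "coef m * m (Inr c) * m (Inl e) \<noteq> 0"
    using assms sum.not_neutral_contains_not_neutral unfolding class_edge_weight_def by blast
  then show ?thesis using PM_class_edge[of m V c e] S(2) by auto
qed

lemma class_edge_weight_row:
  assumes a: "a \<in> V"
  shows "(\<Sum>b\<in>V - {a}. class_edge_weight c {a, b}) = k * v (Inr c)"
proof -
  have "(\<Sum>b\<in>V - {a}. class_edge_weight c {a, b}) = (\<Sum>m\<in>S. coef m * m (Inr c) * (\<Sum>b\<in>V - {a}. m (Inl {a, b})))"
    unfolding class_edge_weight_def by (simp add: sum.swap[of _ _ S] sum_distrib_left)
  also have "\<dots> = (\<Sum>m\<in>S. coef m * m (Inr c))" using PM_degree[OF fin _ a] S(2) by (intro sum.cong) auto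
  finally show ?thesis by (simp add: kv)
qed

lemma table_class_positive:
  fixes HA :: "nat \<Rightarrow> 'a set set"
  assumes HA: "\<forall>d\<in>{1..r}. HA d \<in> Cset V" "\<forall>c\<in>Cset V. card {d\<in>{1..r}. HA d = c} = v (Inr c)"
    and d: "d \<in> {1..r}"
  shows "0 < k * v (Inr (HA d))"
proof -
  have "finite {d'\<in>{1..r}. HA d' = HA d}" using finite_atLeastAtMost[of 1 r] by (rule rev_finite_subset) auto
  moreover have "d \<in> {d'\<in>{1..r}. HA d' = HA d}" using d by simp
  ultimately have "card {d'\<in>{1..r}. HA d' = HA d} > 0" using card_gt_0_iff by blast
  then show ?thesis using HA d k by simp
qed

(* Spreading the generators of class c evenly over the v c entries of the table with
   that class: each generator receives total weight 1/k. *)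
lemma class_average:
  fixes HA :: "nat \<Rightarrow> 'a set set"
  assumes HA: "\<forall>d\<in>{1..r}. HA d \<in> Cset V" "\<forall>c\<in>Cset V. card {d\<in>{1..r}. HA d = c} = v (Inr c)"
    and m: "m \<in> S"
  shows "real (coef m) * (\<Sum>d = 1..r. real (m (Inr (HA d))) / real (k * v (Inr (HA d)))) = real (coef m) / real k"
proof (cases "coef m = 0")
  case False
  obtain q c where qc: "m = chi_EC V q c" "c \<in> Cset V" using PM_E m S(2) by blast
  have "coef m * m (Inr c) \<le> (\<Sum>m'\<in>S. coef m' * m' (Inr c))" using m S(1) by (intro member_le_sum) auto
  then have "coef m \<le> k * v (Inr c)" using qc by (simp add: kv chi_Inr)
  then have vc: "v (Inr c) \<noteq> 0" using False by (metis le_zero_eq mult_0_right)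
  have "(\<Sum>d = 1..r. real (m (Inr (HA d))) / real (k * v (Inr (HA d)))) =
        (\<Sum>d = 1..r. (if HA d = c then 1 else 0) * (1 / real (k * v (Inr c))))"
    using qc HA(1) by (intro sum.cong) (auto simp: chi_Inr)
  also have "\<dots> = real (card {d\<in>{1..r}. HA d = c}) / real (k * v (Inr c))"
    by (simp only: sum_distrib_right[symmetric]) (simp add: sum_indicator)
  also have "\<dots> = 1 / real k" using HA(2) qc(2) vc by simp
  finally show ?thesis by simp
qed simp

lemma averaged_edge_total:
  fixes HA :: "nat \<Rightarrow> 'a set set"
  assumes HA: "\<forall>d\<in>{1..r}. HA d \<in> Cset V" "\<forall>c\<in>Cset V. card {d\<in>{1..r}. HA d = c} = v (Inr c)"
  shows "(\<Sum>d = 1..r. real (class_edge_weight (HA d) e) / real (k * v (Inr (HA d)))) = real (v (Inl e))"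
proof -
  have "(\<Sum>d = 1..r. real (class_edge_weight (HA d) e) / real (k * v (Inr (HA d)))) =
        (\<Sum>m\<in>S. real (m (Inl e)) * (real (coef m) * (\<Sum>d = 1..r. real (m (Inr (HA d))) / real (k * v (Inr (HA d))))))"
    unfolding class_edge_weight_def
    by (simp add: sum_divide_distrib sum_distrib_left sum.swap[of _ _ S] algebra_simps)
  also have "\<dots> = (\<Sum>m\<in>S. real (coef m * m (Inl e))) / real k"
    using class_average[OF HA] by (simp add: sum_divide_distrib algebra_simps)
  also have "\<dots> = real (v (Inl e))" using k by (simp only: of_nat_sum[symmetric] kv[symmetric]) simp
  finally show ?thesis .
qed

lemma averaged_point_PGHA:
  assumes EK: "E \<subseteq> Kset V" and hv: "\<forall>e\<in>Kset V. v (Inl e) = (if e \<in> E then 1 else 0)"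
    and HA: "\<forall>d\<in>{1..r}. HA d \<in> Cset V" "\<forall>c\<in>Cset V. card {d\<in>{1..r}. HA d = c} = v (Inr c)"
  defines "x \<equiv> \<lambda>e d. if e \<in> Kset V \<and> d \<in> {1..r}
                   then real (class_edge_weight (HA d) e) / real (k * v (Inr (HA d))) else 0"
  shows "x \<in> PGHA V E r HA"
  unfolding PGHA_def mem_Collect_eq
proof (intro conjI allI ballI impI)
  fix e d assume "\<not> (e \<in> Kset V \<and> d \<in> {1..r})"
  then show "x e d = 0" unfolding x_def by (rule if_not_P)
next
  fix e assume e: "e \<in> E"
  then have "e \<in> Kset V" using EK by blast
  then show "(\<Sum>d = 1..r. x e d) = 1"
    using averaged_edge_total[OF HA, of e] e hv by (simp add: x_def)
next
  fix e d assume e: "e \<in> Kset V - E"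
  then have "class_edge_weight (HA d) e = 0" using class_edge_weight_le(2)[of "HA d" e] hv by simp
  then show "x e d = 0" by (simp add: x_def)
next
  fix d a assume d: "d \<in> {1..r}" and a: "a \<in> V"
  have "(\<Sum>b\<in>V - {a}. x {a, b} d) = (\<Sum>b\<in>V - {a}. real (class_edge_weight (HA d) {a, b}) / real (k * v (Inr (HA d))))"
  proof (rule sum.cong[OF refl])
    fix b assume "b \<in> V - {a}"
    then have "{a, b} \<in> Kset V" using a by (intro Kset_pair) auto
    then show "x {a, b} d = real (class_edge_weight (HA d) {a, b}) / real (k * v (Inr (HA d)))"
      using d by (simp add: x_def)
  qed
  also have "\<dots> = real (k * v (Inr (HA d))) / real (k * v (Inr (HA d)))"
    by (simp only: sum_divide_distrib[symmetric] of_nat_sum[symmetric] class_edge_weight_row[OF a])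
  also have "\<dots> = 1" using table_class_positive[OF HA d] by simp
  finally show "(\<Sum>b\<in>V - {a}. x {a, b} d) = 1" .
next
  fix e d assume "e \<in> E" and d: "d \<in> {1..r}"
  show "0 \<le> x e d" by (simp add: x_def)
  have "real (class_edge_weight (HA d) e) \<le> real (k * v (Inr (HA d)))"
    using class_edge_weight_le(1) by (simp only: of_nat_le_iff)
  moreover have "0 < real (k * v (Inr (HA d)))" using table_class_positive[OF HA d] by (simp only: of_nat_0_less_iff)
  ultimately show "x e d \<le> 1" by (simp add: x_def divide_le_eq_1_pos del: of_nat_mult)
next
  fix a b d assume h: "{a, b} \<in> E \<and> d \<in> {1..r} \<and> (\<exists>S\<in>HA d. a \<in> S \<and> b \<in> S)"
  then have "HA d \<in> Cset V" using HA(1) by blast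
  then have "{a, b} \<notin> Bedges (HA d)" using h by (simp add: Bedges_iff)
  then have "class_edge_weight (HA d) {a, b} = 0" using class_edge_weight_support by blast
  then show "x {a, b} d = 0" by (simp add: x_def)
qed

end

lemma table_of_multiplicities:
  fixes f :: "'c \<Rightarrow> nat"
  assumes "finite C"
  shows "(\<Sum>c\<in>C. f c) = r \<Longrightarrow> \<exists>HA. (\<forall>d\<in>{1..r}. HA d \<in> C) \<and> (\<forall>c\<in>C. card {d\<in>{1..r}. HA d = c} = f c)"
  using assms
proof (induction C arbitrary: r rule: finite_induct)
  case empty
  then show ?case by auto
next
  case (insert c0 C)
  define r' where "r' = (\<Sum>c\<in>C. f c)"
  have r: "r = r' + f c0" using insert by (simp add: r'_def)
  obtain HA' where HA': "\<forall>d\<in>{1..r'}. HA' d \<in> C" "\<forall>c\<in>C. card {d\<in>{1..r'}. HA' d = c} = f c"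
    using insert.IH[of r'] by (auto simp: r'_def)
  define HA where "HA d = (if d \<le> r' then HA' d else c0)" for d
  have "\<forall>d\<in>{1..r}. HA d \<in> insert c0 C" using HA'(1) by (auto simp: HA_def)
  moreover have "card {d\<in>{1..r}. HA d = c} = f c" if c: "c \<in> insert c0 C" for c
  proof (cases "c = c0")
    case True
    have "{d\<in>{1..r}. HA d = c} = {r' + 1..r}"
      using HA'(1) insert.hyps(2) True by (auto simp: HA_def)
    then show ?thesis using r True by simp
  next
    case False
    then have "{d\<in>{1..r}. HA d = c} = {d\<in>{1..r'}. HA' d = c}" using r by (auto simp: HA_def)
    then show ?thesis using HA'(2) False c by simp
  qed
  ultimately show ?case by blast
qed

(* Over the empty vertex set every vector of the saturation is a multiple of the single
   generator (the empty matching of the trivial partition). *)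
lemma Nbar_empty:
  assumes "v \<in> Nbar {} (PM {})"
  shows "v \<in> Ncomb (PM ({}::'a set))"
proof -
  define c0 :: "'a set set" where "c0 = {{}}"
  have C: "Cset ({}::'a set) = {c0}" unfolding Cset_def c0_def by auto
  have K: "Kset ({}::'a set) = {}" unfolding Kset_def by auto
  define m0 where "m0 = chi_EC ({}::'a set) {} c0"
  have m0: "m0 \<in> PM {}" unfolding PM_def m0_def perfect_matching_B_def using C by auto
  have v: "v = (\<lambda>i. \<Sum>m\<in>{m0}. v (Inr c0) * m i)"
  proof
    fix i
    have "\<forall>i. i \<notin> idx {} \<longrightarrow> v i = 0" using assms by (auto simp: Nbar_def)
    then show "v i = (\<Sum>m\<in>{m0}. v (Inr c0) * m i)"
      using C K by (cases i) (auto simp: m0_def chi_EC_def idx_def)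
  qed
  show ?thesis unfolding Ncomb_def
    by (rule CollectI, rule exI[of _ "{m0}"], rule exI[of _ "\<lambda>_. v (Inr c0)"]) (use m0 v in simp)
qed

lemma Nbar_table_vector:
  assumes fin: "finite V" and reg: "regular_graph V E r" and ne: "V \<noteq> {}"
    and vN: "v \<in> Nbar V (PM V)" and hv: "\<forall>e\<in>Kset V. v (Inl e) = (if e \<in> E then 1 else 0)"
  shows "\<exists>HA. HAP_table V r HA \<and> v = table_vector V E r HA \<and> PGHA V E r HA \<noteq> {}"
proof -
  have EK: "E \<subseteq> Kset V" and deg: "\<forall>a\<in>V. card {e \<in> E. a \<in> e} = r"
    using reg by (auto simp: regular_graph_def)
  obtain k :: nat where k: "k \<ge> 1" "(\<lambda>i. k * v i) \<in> Ncomb (PM V)" using vN by (auto simp: Nbar_def)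
  then obtain S coef where S: "finite S" "S \<subseteq> PM V" "(\<lambda>i. k * v i) = (\<lambda>i. \<Sum>m\<in>S. coef m * m i)"
    unfolding Ncomb_def by blast
  have kv: "k * v i = (\<Sum>m\<in>S. coef m * m i)" for i using fun_cong[OF S(3)] by simp
  obtain a where a: "a \<in> V" using ne by blast
  have "(\<Sum>b\<in>V - {a}. v (Inl {a, b})) = (\<Sum>b\<in>V - {a}. if {a, b} \<in> E then 1 else 0)"
  proof (rule sum.cong[OF refl])
    fix b assume "b \<in> V - {a}"
    then have "{a, b} \<in> Kset V" using a by (intro Kset_pair) auto
    then show "v (Inl {a, b}) = (if {a, b} \<in> E then 1 else 0)" using hv by blast
  qed
  also have "\<dots> = r" using fin deg a degree_as_neighbours[OF EK a] by (simp add: sum_indicator)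
  finally have "(\<Sum>c\<in>Cset V. v (Inr c)) = r"
    using class_total_eq_degree[OF fin S(1,2) k(1) kv a] by simp
  then obtain HA where HA: "\<forall>d\<in>{1..r}. HA d \<in> Cset V" "\<forall>c\<in>Cset V. card {d\<in>{1..r}. HA d = c} = v (Inr c)"
    using table_of_multiplicities[OF finite_Cset[OF fin]] by blast
  have "v = table_vector V E r HA"
  proof
    fix i
    have vz: "\<forall>i. i \<notin> idx V \<longrightarrow> v i = 0" using vN by (auto simp: Nbar_def)
    show "v i = table_vector V E r HA i"
    proof (cases i)
      case (Inl e)
      then show ?thesis using hv vz by (cases "e \<in> Kset V") (auto simp: table_vector_def idx_def)
    next
      case (Inr c)
      then show ?thesis using HA(2) vz by (cases "c \<in> Cset V") (auto simp: table_vector_def idx_def)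
    qed
  qed
  moreover have "PGHA V E r HA \<noteq> {}" using averaged_point_PGHA[OF fin S(1,2) k(1) kv EK hv HA] by blast
  ultimately show ?thesis using HA(1) by (auto simp: HAP_table_def)
qed

theorem B_factorizable_iff_integral_points:
  assumes fin: "finite V" and reg: "regular_graph V E r"
  shows "B_factorizable V E \<longleftrightarrow>
           (\<forall>HA. HAP_table V r HA \<longrightarrow> PGHA V E r HA \<noteq> {} \<longrightarrow> (\<exists>x \<in> PGHA V E r HA. integral_point x))"
proof -
  have EK: "E \<subseteq> Kset V" using reg by (simp add: regular_graph_def)
  have chi_E: "\<forall>e\<in>Kset V. table_vector V E r HA (Inl e) = (if e \<in> E then 1 else 0)" for HA
    by (simp add: table_vector_def)
  show ?thesis
  proof (intro iffI allI impI)
    fix HA assume "B_factorizable V E" "HAP_table V r HA" "PGHA V E r HA \<noteq> {}"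
    then have "table_vector V E r HA \<in> Ncomb (PM V)"
      using table_vector_Nbar[OF fin EK] chi_E unfolding B_factorizable_def by blast
    then show "\<exists>x \<in> PGHA V E r HA. integral_point x"
      using Ncomb_factorization integral_point_iff_factorization[OF fin EK] \<open>HAP_table V r HA\<close> by blast
  next
    assume RHS: "\<forall>HA. HAP_table V r HA \<longrightarrow> PGHA V E r HA \<noteq> {} \<longrightarrow> (\<exists>x \<in> PGHA V E r HA. integral_point x)"
    show "B_factorizable V E"
      unfolding B_factorizable_def
    proof (intro ballI impI)
      fix v assume vN: "v \<in> Nbar V (PM V)" and hv: "\<forall>e\<in>Kset V. v (Inl e) = (if e \<in> E then 1 else 0)"
      show "v \<in> Ncomb (PM V)"
      proof (cases "V = {}")
        case False
        then obtain HA where HA: "HAP_table V r HA" "v = table_vector V E r HA" "PGHA V E r HA \<noteq> {}"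
          using Nbar_table_vector[OF fin reg _ vN hv] by blast
        then obtain q where "HA_factorization V E r HA q"
          using RHS integral_point_iff_factorization[OF fin EK] by blast
        then show ?thesis using factorization_Ncomb HA by simp
      qed (use Nbar_empty vN in blast)
    qed
  qed
qed

lemma complete_graph_regular:
  assumes "finite V"
  shows "regular_graph V (Kset V) (card V - 1)"
  unfolding regular_graph_def
proof (intro conjI ballI)
  fix a assume a: "a \<in> V"
  have "{b\<in>V - {a}. {a, b} \<in> Kset V} = V - {a}" using a by (auto intro: Kset_pair)
  then show "card {e \<in> Kset V. a \<in> e} = card V - 1"
    using degree_as_neighbours[OF subset_refl a] a assms by simp
qed simp

theorem mainTheorem4:
  fixes V :: "'a set" and E :: "'a set set" and r :: nat
  assumes "finite V" and "even (card V)" and "regular_graph V E r"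
  shows "(B_factorizable V E \<longleftrightarrow>
            (\<forall>HA. HAP_table V r HA \<longrightarrow> PGHA V E r HA \<noteq> {} \<longrightarrow>
                  (\<exists>x \<in> PGHA V E r HA. integral_point x)))
       \<and> (B_factorizable V (Kset V) \<longleftrightarrow>
            (\<forall>HA. HAP_table V (card V - 1) HA \<longrightarrow> PGHA V (Kset V) (card V - 1) HA \<noteq> {} \<longrightarrow>
                  (\<exists>x \<in> PGHA V (Kset V) (card V - 1) HA. integral_point x)))"
  using B_factorizable_iff_integral_points[OF assms(1,3)]
    B_factorizable_iff_integral_points[OF assms(1) complete_graph_regular[OF assms(1)]] by blast

end
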